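(* Let $A=(a_n)_{n=1}^N$ and $B=(b_n)_{n=1}^{N'}$ be elements of $\mathcal A_1$, and let $\{\mathcal P_n\}_{n=1}^N$, $\{\mathcal Q_n\}_{n=1}^{N'}$ be sequences of pyramids. Then for any integer $M\in[\min\{N,N'\}]$, $$\rho\Big(\sum_{n=1}^N\mathcal P_n^{a_n},\sum_{n=1}^{N'}\mathcal Q_n^{b_n}\Big)\le\sum_{n=1}^M\rho(\mathcal P_n,\mathcal Q_n)+\frac12\|A-B\|_1+\frac12\sum_{n=M+1}^N a_n+\frac12\sum_{n=M+1}^{N'}b_n.$$
   Context: An mm-space is a triple $(X,d_X,\mu_X)$ with $(X,d_X)$ complete separable metric and $\mu_X$ a Borel probability measure; $\mathcal X$ is the set of mm-isomorphism classes. $Y\prec X$ means there is a 1-Lipschitz $f:X\to Y$ with $f_*\mu_X=\mu_Y$. The box distance $\square(X,Y)$ is the infimum of $\max\{\operatorname{dis}(S),1-\pi(S)\}$ over couplings $\pi$ of $\mu_X,\mu_Y$ and Borel $S\subset X\times Y$, $\operatorname{dis}(S)=\sup\{|d_X(x,x')-d_Y(y,y')|:(x,y),(x',y')\in S\}$. A pyramid is a nonempty box-closed subset of $\mathcal X$ closed downward under $\prec$ and directed. $\overline{\mathbb N}=\mathbb N\cup\{\infty\}$, $[N]=\{1,\dots,N\}$ or $\mathbb N$. $\mathcal A_1$: sequences $(a_n)_{n=1}^N$, $N\in\overline{\mathbb N}$, with $a_n\in(0,1]$, $\sum a_n=1$. Direct sum $\sum_{n=1}^N\mathcal P_n^{a_n}$: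 set of $X\in\mathcal X$ admitting $X_n\in\mathcal P_n$ and 1-Lipschitz $f_n:X_n\to X$ with $\mu_X=\sum_na_n(f_n)_*\mu_{X_n}$. For $A=(a_n)_{n=1}^N$, $B=(b_n)_{n=1}^{N'}$, $\|A-B\|_1=\sum_{n\le\min(N,N')}|a_n-b_n|+\sum_{n>\min(N,N')}(\text{remaining terms of the longer sequence})$, i.e. the $\ell^1$ distance after padding the shorter sequence with zeros. For a pyramid $\mathcal P$ and $k\in\mathbb N$, $\mathcal M(\mathcal P;k,k)$ is the set of Borel probability measures $\mu$ on $\mathbb R^k$ supported in $B^k_k=\{x:\|x\|_\infty\le k\}$ such that $(B^k_k,\|\cdot\|_\infty,\mu)\in\mathcal P$. The metric $\rho$ on pyramids is $\rho(\mathcal P,\mathcal Q)=\sum_{k=1}^\infty\frac{1}{2^k}\cdot\frac{1}{2k}(d_{\mathrm P})_{\mathrm H}(\mathcal M(\mathcal P;k,k),\mathcal M(\mathcal Q;k,k))$, where $d_{\mathrm P}$ is the Prokhorov distance on Borel probability measures on $(\mathbb R^k,\|\cdot\|_\infty)$ ($d_{\mathrm P}(\mu,\nu)=\inf\{\varepsilon>0:\mu(U_\varepsilon(A))\ge\nu(A)-\varepsilon\ \forall A\text{ Borel}\}$, $U_\varepsilon$ the open $\varepsilon$-neighborhood) and $(d_{\mathrm P})_{\mathrm H}$ the associated Hausdorff distance. *)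

theory Defs
  imports "HOL-Analysis.Analysis" "HOL-Probability.Probability" "HOL-Library.Extended_Nat"
begin

text \<open>A (represented) mm-space over carrier type 'a: a metric d and a measure mu;
  the carrier is space mu.\<close>
type_synonym 'a mms = "('a \<Rightarrow> 'a \<Rightarrow> real) \<times> 'a measure"

definition mborel :: "'a set \<Rightarrow> ('a \<Rightarrow> 'a \<Rightarrow> real) \<Rightarrow> 'a measure" where
  "mborel X d = sigma X {U. openin (Metric_space.mtopology X d) U}"

definition mm_space :: "'a mms \<Rightarrow> bool" where
  "mm_space Xm \<longleftrightarrow> (case Xm of (d, \<mu>) \<Rightarrow>
      Metric_space (space \<mu>) d \<and> Metric_space.mcomplete (space \<mu>) d \<and>
      separable_space (Metric_space.mtopology (space \<mu>) d) \<and>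
      sets \<mu> = sets (mborel (space \<mu>) d) \<and> prob_space \<mu>)"

definition mm_supp :: "'a mms \<Rightarrow> 'a set" where
  "mm_supp Xm = {x \<in> space (snd Xm). \<forall>r>0.
      emeasure (snd Xm) (Metric_space.mball (space (snd Xm)) (fst Xm) x r) > 0}"

definition mm_iso :: "'a mms \<Rightarrow> 'b mms \<Rightarrow> bool" where
  "mm_iso X Y \<longleftrightarrow> (\<exists>f. bij_betw f (mm_supp X) (mm_supp Y) \<and>
      (\<forall>x\<in>mm_supp X. \<forall>x'\<in>mm_supp X. fst Y (f x) (f x') = fst X x x') \<and>
      (\<forall>A\<in>sets (snd Y). measure (snd X) (f -` A \<inter> mm_supp X) = measure (snd Y) A))"

text \<open>The universe of mm-isomorphism classes, represented by full-support mm-spaces whose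
  carrier is a subset of the reals (every complete separable metric space has cardinality at
  most continuum, and every mm-space is isomorphic to the support of its measure).\<close>
definition mmX :: "real mms set" where
  "mmX = {X. mm_space X \<and> mm_supp X = space (snd X)}"

definition lip1 :: "('a \<Rightarrow> 'b) \<Rightarrow> 'a mms \<Rightarrow> 'b mms \<Rightarrow> bool" where
  "lip1 f X Y \<longleftrightarrow> f \<in> space (snd X) \<rightarrow> space (snd Y) \<and>
      (\<forall>x\<in>space (snd X). \<forall>x'\<in>space (snd X). fst Y (f x) (f x') \<le> fst X x x')"

text \<open>Lipschitz order: mm_prec Y X means Y \<prec> X.\<close>
definition mm_prec :: "'b mms \<Rightarrow> 'a mms \<Rightarrow> bool" where
  "mm_prec Y X \<longleftrightarrow> (\<exists>f. lip1 f X Y \<and> f \<in> measurable (snd X) (snd Y) \<and>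
      distr (snd X) (snd Y) f = snd Y)"

definition coupling :: "('a \<times> 'b) measure \<Rightarrow> 'a measure \<Rightarrow> 'b measure \<Rightarrow> bool" where
  "coupling \<pi> \<mu> \<nu> \<longleftrightarrow> prob_space \<pi> \<and> sets \<pi> = sets (\<mu> \<Otimes>\<^sub>M \<nu>) \<and>
      distr \<pi> \<mu> fst = \<mu> \<and> distr \<pi> \<nu> snd = \<nu>"

definition dis :: "'a mms \<Rightarrow> 'b mms \<Rightarrow> ('a \<times> 'b) set \<Rightarrow> ereal" where
  "dis X Y S = (SUP p \<in> S \<times> S.
      ereal \<bar>fst X (fst (fst p)) (fst (snd p)) - fst Y (snd (fst p)) (snd (snd p))\<bar>)"

definition box :: "'a mms \<Rightarrow> 'b mms \<Rightarrow> ereal" where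
  "box X Y = (INF pS \<in> {(\<pi>, S). coupling \<pi> (snd X) (snd Y) \<and> S \<in> sets \<pi>}.
      max (dis X Y (snd pS)) (1 - ereal (measure (fst pS) (snd pS))))"

definition box_closed :: "real mms set \<Rightarrow> bool" where
  "box_closed P \<longleftrightarrow> (\<forall>Xs X. (\<forall>i. Xs i \<in> P) \<and> X \<in> mmX \<and>
      (\<lambda>i. box (Xs i) X) \<longlonglongrightarrow> 0 \<longrightarrow> X \<in> P)"

definition pyramid :: "real mms set \<Rightarrow> bool" where
  "pyramid P \<longleftrightarrow> P \<subseteq> mmX \<and> P \<noteq> {} \<and> box_closed P \<and>
      (\<forall>X\<in>P. \<forall>Y\<in>mmX. mm_prec Y X \<longrightarrow> Y \<in> P) \<and>
      (\<forall>X\<in>P. \<forall>X'\<in>P. \<exists>Y\<in>P. mm_prec X Y \<and> mm_prec X' Y)"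

definition idx :: "enat \<Rightarrow> nat set" where
  "idx N = {n. 1 \<le> n \<and> enat n \<le> N}"

definition in_A1 :: "(nat \<Rightarrow> real) \<Rightarrow> enat \<Rightarrow> bool" where
  "in_A1 a N \<longleftrightarrow> (\<forall>n\<in>idx N. 0 < a n \<and> a n \<le> 1) \<and> (a has_sum 1) (idx N)"

definition pad :: "(nat \<Rightarrow> real) \<Rightarrow> enat \<Rightarrow> nat \<Rightarrow> real" where
  "pad a N n = (if n \<in> idx N then a n else 0)"

definition l1dist :: "(nat \<Rightarrow> real) \<Rightarrow> enat \<Rightarrow> (nat \<Rightarrow> real) \<Rightarrow> enat \<Rightarrow> real" where
  "l1dist a N b N' = infsum (\<lambda>n. \<bar>pad a N n - pad b N' n\<bar>) {1..}"

definition dirsum :: "(nat \<Rightarrow> real mms set) \<Rightarrow> (nat \<Rightarrow> real) \<Rightarrow> enat \<Rightarrow> real mms set" where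
  "dirsum P a N = {X \<in> mmX. \<exists>Xs fs.
      (\<forall>n\<in>idx N. Xs n \<in> P n \<and> lip1 (fs n) (Xs n) X \<and> fs n \<in> measurable (snd (Xs n)) (snd X)) \<and>
      (\<forall>A\<in>sets (snd X).
         ((\<lambda>n. a n * measure (snd (Xs n)) (fs n -` A \<inter> space (snd (Xs n)))) has_sum
            measure (snd X) A) (idx N))}"

text \<open>R^k is represented as functions nat => real vanishing from index k on.\<close>
definition Rk :: "nat \<Rightarrow> (nat \<Rightarrow> real) set" where
  "Rk k = {x. \<forall>i\<ge>k. x i = 0}"

definition dinf :: "nat \<Rightarrow> (nat \<Rightarrow> real) \<Rightarrow> (nat \<Rightarrow> real) \<Rightarrow> real" where
  "dinf k x y = Max ((\<lambda>i. \<bar>x i - y i\<bar>) ` {..<k})"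

definition Bkk :: "nat \<Rightarrow> (nat \<Rightarrow> real) set" where
  "Bkk k = {x \<in> Rk k. \<forall>i<k. \<bar>x i\<bar> \<le> real k}"

definition Mset :: "real mms set \<Rightarrow> nat \<Rightarrow> (nat \<Rightarrow> real) measure set" where
  "Mset P k = {\<mu>. sets \<mu> = sets (mborel (Rk k) (dinf k)) \<and> prob_space \<mu> \<and>
      emeasure \<mu> (Rk k - Bkk k) = 0 \<and>
      (\<exists>X\<in>P. mm_iso X (dinf k, restrict_space \<mu> (Bkk k)))}"

definition nbhd :: "nat \<Rightarrow> real \<Rightarrow> (nat \<Rightarrow> real) set \<Rightarrow> (nat \<Rightarrow> real) set" where
  "nbhd k e A = {x \<in> Rk k. \<exists>y\<in>A. dinf k x y < e}"

definition dP :: "nat \<Rightarrow> (nat \<Rightarrow> real) measure \<Rightarrow> (nat \<Rightarrow> real) measure \<Rightarrow> real" where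
  "dP k \<mu> \<nu> = Inf {e. 0 < e \<and> (\<forall>A\<in>sets \<nu>. measure \<mu> (nbhd k e A) \<ge> measure \<nu> A - e)}"

definition dH :: "nat \<Rightarrow> (nat \<Rightarrow> real) measure set \<Rightarrow> (nat \<Rightarrow> real) measure set \<Rightarrow> real" where
  "dH k S T = max (SUP \<mu>\<in>S. INF \<nu>\<in>T. dP k \<mu> \<nu>) (SUP \<nu>\<in>T. INF \<mu>\<in>S. dP k \<mu> \<nu>)"

definition rho :: "real mms set \<Rightarrow> real mms set \<Rightarrow> real" where
  "rho P Q = (\<Sum>k. (1 / 2 ^ Suc k) * (1 / (2 * real (Suc k))) *
      dH (Suc k) (Mset P (Suc k)) (Mset Q (Suc k)))"

end

theory Submission
  imports Defs
begin

text \<open>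
  For every k, the measures in Mset (dirsum P a N) k are exactly the mixtures, with weights a, of
  measures from the Mset (P n) k. Such a measure is isometric to a witness X of the direct sum, and
  pushing the components of X forward along this isometry decomposes it; conversely a mixture,
  realized over the reals, is a direct sum of representatives of its components. If the first M
  components of two mixtures are Prokhorov-close at radius e, the mixtures are close at radius e
  plus the l1 distance of the weights plus the weight of the remaining components. Hence each
  Hausdorff term of rho for the direct sums is at most the sum of the corresponding terms for the
  first M pyramids plus the l1 distance and both tails, and the weights of rho add up to at most 1/2.
\<close>

lemma abs_diff_le_dinf: "i < k \<Longrightarrow> \<bar>x i - y i\<bar> \<le> dinf k x y"
  unfolding dinf_def by (rule Max_ge) auto

lemma dinf_less_iff: "0 < k \<Longrightarrow> dinf k x y < r \<longleftrightarrow> (\<forall>i<k. \<bar>x i - y i\<bar> < r)"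
  unfolding dinf_def by (subst Max_less_iff) auto

lemma dinf_le_iff: "0 < k \<Longrightarrow> dinf k x y \<le> r \<longleftrightarrow> (\<forall>i<k. \<bar>x i - y i\<bar> \<le> r)"
  unfolding dinf_def by (subst Max_le_iff) auto

lemma dinf_nonneg: "0 < k \<Longrightarrow> 0 \<le> dinf k x y"
  using abs_diff_le_dinf[of 0 k x y] by simp

lemma dinf_commute: "dinf k x y = dinf k y x"
  unfolding dinf_def by (simp add: abs_minus_commute)

lemma dinf_triangle: "0 < k \<Longrightarrow> dinf k x z \<le> dinf k x y + dinf k y z"
  unfolding dinf_le_iff
proof (intro allI impI)
  fix i assume "i < k"
  then have "\<bar>x i - y i\<bar> \<le> dinf k x y" "\<bar>y i - z i\<bar> \<le> dinf k y z"
    by (auto intro: abs_diff_le_dinf)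
  then show "\<bar>x i - z i\<bar> \<le> dinf k x y + dinf k y z" by linarith
qed

lemma Metric_space_Rk: assumes "0 < k" shows "Metric_space (Rk k) (dinf k)"
proof
  fix x y assume x: "x \<in> Rk k" and y: "y \<in> Rk k"
  show "dinf k x y = 0 \<longleftrightarrow> x = y"
  proof
    assume "dinf k x y = 0"
    then have "\<forall>i<k. x i = y i" using dinf_le_iff[OF assms, of x y 0] by simp
    moreover have "\<forall>i\<ge>k. x i = y i" using x y unfolding Rk_def by auto
    ultimately show "x = y" by (metis not_le ext)
  qed (use dinf_le_iff[OF assms, of x y 0] dinf_nonneg[OF assms, of x y] in simp)
next
  fix x y z show "dinf k x z \<le> dinf k x y + dinf k y z" by (rule dinf_triangle[OF assms])
qed (simp_all add: assms dinf_nonneg dinf_commute)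

lemma mcomplete_Rk: assumes "0 < k" shows "Metric_space.mcomplete (Rk k) (dinf k)"
proof -
  interpret Metric_space "Rk k" "dinf k" by (rule Metric_space_Rk[OF assms])
  show ?thesis unfolding mcomplete_def
  proof (intro allI impI)
    fix \<sigma> assume C: "MCauchy \<sigma>"
    have "Cauchy (\<lambda>n. \<sigma> n i)" if "i < k" for i
    proof (rule CauchyI)
      fix e :: real assume "0 < e"
      then obtain N where "\<forall>n n'. N \<le> n \<longrightarrow> N \<le> n' \<longrightarrow> dinf k (\<sigma> n) (\<sigma> n') < e"
        using C unfolding MCauchy_def by blast
      then show "\<exists>M. \<forall>m\<ge>M. \<forall>n\<ge>M. norm (\<sigma> m i - \<sigma> n i) < e"
        using abs_diff_le_dinf[OF that] by (metis le_less_trans real_norm_def)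
    qed
    then have lim: "(\<lambda>n. \<sigma> n i) \<longlonglongrightarrow> lim (\<lambda>n. \<sigma> n i)" if "i < k" for i
      using that by (simp add: Cauchy_convergent_iff convergent_LIMSEQ_iff)
    define L where "L i = (if i < k then lim (\<lambda>n. \<sigma> n i) else 0)" for i
    have "limitin mtopology \<sigma> L sequentially"
      unfolding limitin_metric
    proof (intro conjI allI impI)
      show "L \<in> Rk k" unfolding L_def Rk_def by auto
      fix e :: real assume e: "0 < e"
      have "\<forall>i\<in>{..<k}. \<forall>\<^sub>F n in sequentially. \<bar>\<sigma> n i - L i\<bar> < e"
        using lim e by (auto simp: L_def tendsto_iff dist_real_def)
      then have "\<forall>\<^sub>F n in sequentially. \<forall>i\<in>{..<k}. \<bar>\<sigma> n i - L i\<bar> < e"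
        by (intro eventually_ball_finite) auto
      then show "\<forall>\<^sub>F n in sequentially. \<sigma> n \<in> Rk k \<and> dinf k (\<sigma> n) L < e"
        using C unfolding MCauchy_def by (auto elim!: eventually_mono simp: dinf_less_iff[OF assms])
    qed
    then show "\<exists>x. limitin mtopology \<sigma> x sequentially" by blast
  qed
qed

lemma countable_dense_Rk:
  assumes "0 < k"
  obtains C where "countable C" "C \<subseteq> Rk k" "\<And>x r. x \<in> Rk k \<Longrightarrow> r > 0 \<Longrightarrow> \<exists>c\<in>C. dinf k x c < r"
proof
  define C where
    "C = range (\<lambda>l::rat list. \<lambda>i. if i < k \<and> i < length l then real_of_rat (l ! i) else 0)"
  show "countable C" "C \<subseteq> Rk k" unfolding C_def Rk_def by auto
  fix x r assume x: "x \<in> Rk k" and r: "(r::real) > 0"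
  have "\<exists>q::rat. \<bar>x i - real_of_rat q\<bar> < r" for i
  proof -
    obtain q where q: "q \<in> \<rat>" "x i - r < q" "q < x i" using Rats_dense_in_real[of "x i - r" "x i"] r by auto
    then obtain q' where "q = real_of_rat q'" by (auto elim: Rats_cases)
    then show ?thesis using q by (intro exI[of _ q']) auto
  qed
  then have q: "\<bar>x i - real_of_rat (SOME q. \<bar>x i - real_of_rat q\<bar> < r)\<bar> < r" for i
    by (rule someI_ex)
  define l where "l = map (\<lambda>i. SOME q. \<bar>x i - real_of_rat q\<bar> < r) [0..<k]"
  define c where "c = (\<lambda>i. if i < k \<and> i < length l then real_of_rat (l ! i) else 0)"
  have "c \<in> C" unfolding C_def c_def by blast
  moreover have "dinf k x c < r"
    using q by (simp add: dinf_less_iff[OF assms] c_def l_def)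
  ultimately show "\<exists>c\<in>C. dinf k x c < r" by blast
qed

lemma Rk_minus_Bkk_open:
  assumes k: "0 < k" and x: "x \<in> Rk k - Bkk k"
  shows "\<exists>r>0. Metric_space.mball (Rk k) (dinf k) x r \<subseteq> Rk k - Bkk k"
proof -
  interpret Metric_space "Rk k" "dinf k" by (rule Metric_space_Rk[OF k])
  obtain i where i: "i < k" "\<bar>x i\<bar> > real k" using x unfolding Bkk_def by auto
  have "mball x (\<bar>x i\<bar> - real k) \<subseteq> Rk k - Bkk k"
  proof
    fix y assume "y \<in> mball x (\<bar>x i\<bar> - real k)"
    then have "y \<in> Rk k" "\<bar>x i - y i\<bar> < \<bar>x i\<bar> - real k"
      using abs_diff_le_dinf[OF i(1), of x y] by auto
    then show "y \<in> Rk k - Bkk k" using i unfolding Bkk_def by auto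
  qed
  then show ?thesis using i by (intro exI[of _ "\<bar>x i\<bar> - real k"]) auto
qed

lemma Bkk_subset: "Bkk k \<subseteq> Rk k"
  unfolding Bkk_def by auto

lemma closedin_Bkk:
  assumes k: "0 < k" shows "closedin (Metric_space.mtopology (Rk k) (dinf k)) (Bkk k)"
  unfolding closedin_def Metric_space.topspace_mtopology[OF Metric_space_Rk[OF k]]
  using Rk_minus_Bkk_open[OF k] Bkk_subset
  by (auto simp: Metric_space.openin_mtopology[OF Metric_space_Rk[OF k]])

lemma openin_nbhd:
  assumes k: "0 < k" shows "openin (Metric_space.mtopology (Rk k) (dinf k)) (nbhd k e A)"
  unfolding Metric_space.openin_mtopology[OF Metric_space_Rk[OF k]]
proof (intro conjI allI impI)
  show "nbhd k e A \<subseteq> Rk k" unfolding nbhd_def by auto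
  fix x assume "x \<in> nbhd k e A"
  then obtain y where y: "x \<in> Rk k" "y \<in> A" "dinf k x y < e" unfolding nbhd_def by auto
  have "Metric_space.mball (Rk k) (dinf k) x (e - dinf k x y) \<subseteq> nbhd k e A"
  proof
    fix z assume "z \<in> Metric_space.mball (Rk k) (dinf k) x (e - dinf k x y)"
    then have z: "z \<in> Rk k" "dinf k x z < e - dinf k x y"
      by (auto simp: Metric_space.in_mball[OF Metric_space_Rk[OF k]])
    have "dinf k z y \<le> dinf k z x + dinf k x y" by (rule dinf_triangle[OF k])
    then have "dinf k z y < e" using z dinf_commute[of k x z] by linarith
    then show "z \<in> nbhd k e A" using z y unfolding nbhd_def by blast
  qed
  then show "\<exists>r>0. Metric_space.mball (Rk k) (dinf k) x r \<subseteq> nbhd k e A"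
    using y by (intro exI[of _ "e - dinf k x y"]) auto
qed

lemma nbhd_mono: "e \<le> e' \<Longrightarrow> nbhd k e A \<subseteq> nbhd k e' A"
  unfolding nbhd_def using less_le_trans by blast

lemma mborel_generator_subset:
  "Metric_space M d \<Longrightarrow> {U. openin (Metric_space.mtopology M d) U} \<subseteq> Pow M"
  using openin_subset Metric_space.topspace_mtopology by fastforce

lemma space_mborel: "Metric_space M d \<Longrightarrow> space (mborel M d) = M"
  unfolding mborel_def by (rule space_measure_of[OF mborel_generator_subset])

lemma sets_mborel: "Metric_space M d \<Longrightarrow>
   sets (mborel M d) = sigma_sets M {U. openin (Metric_space.mtopology M d) U}"
  unfolding mborel_def by (rule sets_measure_of[OF mborel_generator_subset])

lemma openin_mborel:
  "Metric_space M d \<Longrightarrow> openin (Metric_space.mtopology M d) U \<Longrightarrow> U \<in> sets (mborel M d)"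
  by (simp add: sets_mborel)

lemma closedin_mborel:
  assumes "Metric_space M d" "closedin (Metric_space.mtopology M d) C"
  shows "C \<in> sets (mborel M d)"
proof -
  have "openin (Metric_space.mtopology M d) (M - C)" "C \<subseteq> M"
    using assms by (auto simp: closedin_def Metric_space.topspace_mtopology)
  then have "M - (M - C) \<in> sets (mborel M d)"
    using assms(1) by (simp add: sets_mborel sigma_sets.Basic sigma_sets.Compl)
  with \<open>C \<subseteq> M\<close> show ?thesis by (simp add: double_diff)
qed

lemma mball_in_mborel: "Metric_space M d \<Longrightarrow> Metric_space.mball M d x r \<in> sets (mborel M d)"
  by (simp add: openin_mborel Metric_space.openin_mball)

lemma sets_Bkk: "0 < k \<Longrightarrow> Bkk k \<in> sets (mborel (Rk k) (dinf k))"
  by (rule closedin_mborel[OF Metric_space_Rk closedin_Bkk])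

lemma sets_Rk_minus_Bkk: "0 < k \<Longrightarrow> Rk k - Bkk k \<in> sets (mborel (Rk k) (dinf k))"
  using sets.compl_sets[OF sets_Bkk] space_mborel[OF Metric_space_Rk] by metis

lemma lipschitz_measurable:
  assumes A: "Metric_space A dA" and C: "Metric_space C dC" and s: "sets M = sets (mborel A dA)"
    and f: "f \<in> A \<rightarrow> C" and lip: "\<And>x y. x \<in> A \<Longrightarrow> y \<in> A \<Longrightarrow> dC (f x) (f y) \<le> dA x y"
  shows "f \<in> measurable M (mborel C dC)"
proof -
  have "f \<in> measurable (mborel A dA) (mborel C dC)"
    unfolding mborel_def[of C]
  proof (rule measurable_measure_of[OF mborel_generator_subset[OF C]])
    show "f \<in> space (mborel A dA) \<rightarrow> C" using f space_mborel[OF A] by simp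
    fix U assume "U \<in> {U. openin (Metric_space.mtopology C dC) U}"
    then have U: "openin (Metric_space.mtopology C dC) U" by simp
    have "openin (Metric_space.mtopology A dA) (f -` U \<inter> A)"
      unfolding Metric_space.openin_mtopology[OF A]
    proof (intro conjI allI impI)
      fix x assume x: "x \<in> f -` U \<inter> A"
      then obtain r where r: "r > 0" "Metric_space.mball C dC (f x) r \<subseteq> U"
        using U unfolding Metric_space.openin_mtopology[OF C] by blast
      have "Metric_space.mball A dA x r \<subseteq> f -` U \<inter> A"
        using x f lip r(2) by (force simp: Metric_space.in_mball[OF A] Metric_space.in_mball[OF C])
      then show "\<exists>r>0. Metric_space.mball A dA x r \<subseteq> f -` U \<inter> A" using r by blast
    qed auto
    then show "f -` U \<inter> space (mborel A dA) \<in> sets (mborel A dA)"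
      using openin_mborel[OF A] space_mborel[OF A] by simp
  qed
  then show ?thesis using measurable_cong_sets[OF s refl, of "mborel C dC"] by simp
qed

lemma sets_mborel_subspace:
  assumes M: "Metric_space M d" and S: "S \<in> sets (mborel M d)" "S \<subseteq> M"
  shows "sets (mborel S d) = sets (restrict_space (mborel M d) S)"
proof -
  interpret Submetric M d S using M S by (simp add: Submetric_def Submetric_axioms_def)
  have gen: "{U. openin (Metric_space.mtopology S d) U} =
      (\<inter>) S ` {U. openin (Metric_space.mtopology M d) U}"
    using mtopology_submetric by (auto simp: openin_subtopology)
  have "sets (restrict_space (mborel M d) S) = (\<inter>) S ` sigma_sets M {U. openin (Metric_space.mtopology M d) U}"
    using S space_mborel[OF M] by (simp add: sets_restrict_space Int_absorb1 sets_mborel[OF M])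
  also have "\<dots> = sigma_sets S ((\<inter>) S ` {U. openin (Metric_space.mtopology M d) U})"
    using S by (intro sigma_sets_Int) (auto simp: sets_mborel[OF M])
  also have "\<dots> = sets (mborel S d)" by (simp add: sets_mborel[OF sub.Metric_space_axioms] gen)
  finally show ?thesis by simp
qed

lemma separable_space_if_dense:
  assumes M: "Metric_space M d" and C: "countable C" "C \<subseteq> M"
    and D: "\<And>x r. x \<in> M \<Longrightarrow> r > 0 \<Longrightarrow> \<exists>c\<in>C. d x c < r"
  shows "separable_space (Metric_space.mtopology M d)"
  unfolding separable_space_def
proof (intro exI[of _ C] conjI)
  show "C \<subseteq> topspace (Metric_space.mtopology M d)"
    using C by (simp add: Metric_space.topspace_mtopology[OF M])
  have "\<forall>x\<in>M. \<forall>r>0. \<exists>y\<in>C. y \<in> M \<and> d x y < r" using D C by (meson subsetD)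
  then show "Metric_space.mtopology M d closure_of C = topspace (Metric_space.mtopology M d)"
    by (auto simp: Metric_space.metric_closure_of[OF M] Metric_space.topspace_mtopology[OF M]
        Metric_space.in_mball[OF M])
qed (fact C)

lemma countable_dense_subset:
  assumes M: "Metric_space M d" and C: "countable C" "C \<subseteq> M"
    and D: "\<And>x r. x \<in> M \<Longrightarrow> r > 0 \<Longrightarrow> \<exists>c\<in>C. d x c < r" and S: "S \<subseteq> M"
  obtains C' where "countable C'" "C' \<subseteq> S" "\<And>x r. x \<in> S \<Longrightarrow> r > 0 \<Longrightarrow> \<exists>c\<in>C'. d x c < r"
proof
  \<comment> \<open>for each centre c and radius 1/(n+1) meeting S, pick one point of S\<close>
  define p where "p c n = (SOME y. y \<in> S \<and> d c y < 1 / real (Suc n))" for c n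
  define I where "I = {(c, n). c \<in> C \<and> (\<exists>y\<in>S. d c y < 1 / real (Suc n))}"
  have p: "p c n \<in> S \<and> d c (p c n) < 1 / real (Suc n)" if "(c, n) \<in> I" for c n
    using that unfolding p_def I_def by (metis (mono_tags, lifting) case_prodD mem_Collect_eq someI_ex)
  have "countable I"
    using countable_SIGMA[OF C(1), of "\<lambda>_. UNIV :: nat set"]
    by (rule countable_subset[rotated]) (auto simp: I_def)
  then show "countable (case_prod p ` I)" by simp
  show "case_prod p ` I \<subseteq> S" using p by auto
  fix x and r :: real assume x: "x \<in> S" and r: "r > 0"
  obtain n where n: "1 / real (Suc n) < r / 2" using r by (metis half_gt_zero nat_approx_posE)
  obtain c where c: "c \<in> C" "d x c < 1 / real (Suc n)" using D[of x "1 / real (Suc n)"] x S by auto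
  then have cn: "(c, n) \<in> I" using x Metric_space.commute[OF M, of c x] unfolding I_def by force
  have "d x (p c n) \<le> d x c + d c (p c n)"
    using Metric_space.triangle[OF M] x S c C p[OF cn] by blast
  then have "d x (p c n) < r" using c p[OF cn] n by linarith
  then show "\<exists>c\<in>case_prod p ` I. d x c < r" using cn by force
qed

lemma closedin_mm_supp:
  assumes M: "Metric_space (space m) d" and s: "sets m = sets (mborel (space m) d)"
  shows "closedin (Metric_space.mtopology (space m) d) (mm_supp (d, m))"
proof -
  interpret Metric_space "space m" d by (fact M)
  have "openin mtopology (space m - mm_supp (d, m))"
    unfolding openin_mtopology
  proof (intro conjI allI impI)
    fix x assume x: "x \<in> space m - mm_supp (d, m)"
    then obtain r where r: "r > 0" "emeasure m (mball x r) = 0"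
      unfolding mm_supp_def by auto
    \<comment> \<open>every point y of the null ball mball x r has the null ball mball y (r - d x y) around it\<close>
    have "y \<notin> mm_supp (d, m)" if y: "y \<in> mball x r" for y
    proof
      assume "y \<in> mm_supp (d, m)"
      moreover have "r - d x y > 0" using y by simp
      ultimately have "0 < emeasure m (mball y (r - d x y))" unfolding mm_supp_def by auto
      also have "\<dots> \<le> emeasure m (mball x r)"
        using y triangle by (intro emeasure_mono) (force, simp add: s mball_in_mborel[OF M])
      finally show False using r by simp
    qed
    then have "mball x r \<subseteq> space m - mm_supp (d, m)" by auto
    then show "\<exists>r>0. mball x r \<subseteq> space m - mm_supp (d, m)" using r by blast
  qed auto
  moreover have "mm_supp (d, m) \<subseteq> space m" unfolding mm_supp_def by auto
  ultimately show ?thesis unfolding closedin_def topspace_mtopology by blast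
qed

lemma mmX_D:
  assumes "X \<in> mmX"
  shows "Metric_space (space (snd X)) (fst X)" "prob_space (snd X)"
    "sets (snd X) = sets (mborel (space (snd X)) (fst X))" "mm_supp X = space (snd X)"
  using assms unfolding mmX_def mm_space_def by (auto split: prod.splits)

lemma lipschitz_image_subset_mm_supp:
  assumes Y: "Y \<in> mmX" and M: "Metric_space M d" and \<phi>: "\<phi> \<in> space (snd Y) \<rightarrow> M"
    and lip: "\<And>y y'. y \<in> space (snd Y) \<Longrightarrow> y' \<in> space (snd Y) \<Longrightarrow> d (\<phi> y) (\<phi> y') \<le> fst Y y y'"
  shows "\<phi> ` space (snd Y) \<subseteq> mm_supp (d, distr (snd Y) (mborel M d) \<phi>)"
proof safe
  interpret Y: Metric_space "space (snd Y)" "fst Y" by (rule mmX_D(1)[OF Y])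
  interpret M: Metric_space M d by (fact M)
  have \<phi>_meas: "\<phi> \<in> measurable (snd Y) (mborel M d)"
    by (rule lipschitz_measurable[OF mmX_D(1)[OF Y] M mmX_D(3)[OF Y] \<phi> lip])
  fix y assume y: "y \<in> space (snd Y)"
  have "0 < emeasure (distr (snd Y) (mborel M d) \<phi>) (M.mball (\<phi> y) r)" if r: "r > 0" for r
  proof -
    have "0 < emeasure (snd Y) (Y.mball y r)"
      using y r mmX_D(4)[OF Y] unfolding mm_supp_def by auto
    also have "\<dots> \<le> emeasure (snd Y) (\<phi> -` M.mball (\<phi> y) r \<inter> space (snd Y))"
      using y \<phi> lip measurable_sets[OF \<phi>_meas mball_in_mborel[OF M]]
      by (intro emeasure_mono) (force, simp)
    also have "\<dots> = emeasure (distr (snd Y) (mborel M d) \<phi>) (M.mball (\<phi> y) r)"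
      using \<phi>_meas by (simp add: emeasure_distr mball_in_mborel[OF M])
    finally show ?thesis .
  qed
  then show "\<phi> y \<in> mm_supp (d, distr (snd Y) (mborel M d) \<phi>)"
    using y \<phi> by (auto simp: mm_supp_def space_mborel[OF M])
qed

definition prob_Rk :: "nat \<Rightarrow> (nat \<Rightarrow> real) measure \<Rightarrow> bool" where
  "prob_Rk k \<mu> \<longleftrightarrow> sets \<mu> = sets (mborel (Rk k) (dinf k)) \<and> prob_space \<mu>"

abbreviation supp_Rk :: "nat \<Rightarrow> (nat \<Rightarrow> real) measure \<Rightarrow> (nat \<Rightarrow> real) set" where
  "supp_Rk k \<mu> \<equiv> mm_supp (dinf k, \<mu>)"

lemma space_prob_Rk: "0 < k \<Longrightarrow> prob_Rk k \<mu> \<Longrightarrow> space \<mu> = Rk k"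
  unfolding prob_Rk_def using space_mborel[OF Metric_space_Rk] by (metis sets_eq_imp_space_eq)

lemma supp_Rk_subset: "0 < k \<Longrightarrow> prob_Rk k \<mu> \<Longrightarrow> supp_Rk k \<mu> \<subseteq> Rk k"
  using space_prob_Rk unfolding mm_supp_def by auto

lemma sets_supp_Rk:
  assumes k: "0 < k" and \<mu>: "prob_Rk k \<mu>"
  shows "supp_Rk k \<mu> \<in> sets (mborel (Rk k) (dinf k))"
proof (rule closedin_mborel[OF Metric_space_Rk[OF k]])
  show "closedin (Metric_space.mtopology (Rk k) (dinf k)) (supp_Rk k \<mu>)"
    using closedin_mm_supp[of \<mu> "dinf k"] Metric_space_Rk[OF k] \<mu>
    by (simp add: prob_Rk_def space_prob_Rk[OF k \<mu>])
qed

lemma prob_Rk_distr: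
  assumes "prob_space M" "f \<in> measurable M (mborel (Rk k) (dinf k))"
  shows "prob_Rk k (distr M (mborel (Rk k) (dinf k)) f)"
  using assms by (simp add: prob_Rk_def prob_space.prob_space_distr)

text \<open>Since Rk is separable, the complement of the support is covered by countably many null
  balls.\<close>

lemma null_sets_compl_supp_Rk:
  assumes k: "0 < k" and \<mu>: "prob_Rk k \<mu>"
  shows "Rk k - supp_Rk k \<mu> \<in> null_sets \<mu>"
proof -
  interpret R: Metric_space "Rk k" "dinf k" by (rule Metric_space_Rk[OF k])
  have sp: "space \<mu> = Rk k" by (rule space_prob_Rk[OF k \<mu>])
  have balls: "R.mball x r \<in> sets \<mu>" for x r
    using \<mu> by (simp add: prob_Rk_def mball_in_mborel[OF R.Metric_space_axioms])
  obtain C where C: "countable C" "C \<subseteq> Rk k"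
    and dense: "\<And>x r. x \<in> Rk k \<Longrightarrow> r > 0 \<Longrightarrow> \<exists>c\<in>C. dinf k x c < r"
    using countable_dense_Rk[OF k] by blast
  define Z where "Z = {(c, q). c \<in> C \<and> q \<in> \<rat> \<and> emeasure \<mu> (R.mball c q) = 0}"
  have "countable Z"
    by (rule countable_subset[OF _ countable_SIGMA[OF C(1) countable_rat]]) (auto simp: Z_def)
  then have null: "(\<Union>(c, q)\<in>Z. R.mball c q) \<in> null_sets \<mu>"
    by (intro null_sets_UN') (auto simp: Z_def null_sets_def balls)
  have "Rk k - supp_Rk k \<mu> \<subseteq> (\<Union>(c, q)\<in>Z. R.mball c q)"
  proof
    fix x assume x: "x \<in> Rk k - supp_Rk k \<mu>"
    then obtain r where r: "r > 0" "emeasure \<mu> (R.mball x r) = 0"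
      using sp unfolding mm_supp_def by auto
    obtain q where q: "q \<in> \<rat>" "0 < q" "q < r / 2" using Rats_dense_in_real[of 0 "r / 2"] r by auto
    obtain c where c: "c \<in> C" "dinf k x c < q" using dense[of x q] x q by auto
    have "R.mball c q \<subseteq> R.mball x r"
    proof
      fix z assume "z \<in> R.mball c q"
      moreover have "dinf k x z \<le> dinf k x c + dinf k c z" by (rule dinf_triangle[OF k])
      ultimately show "z \<in> R.mball x r" using x c q by auto
    qed
    then have "emeasure \<mu> (R.mball c q) = 0" using r balls by (metis emeasure_mono le_zero_eq)
    moreover have "x \<in> R.mball c q" using x c C dinf_commute[of k x c] by auto
    ultimately show "x \<in> (\<Union>(c, q)\<in>Z. R.mball c q)" using c q unfolding Z_def by blast
  qed
  moreover have "Rk k - supp_Rk k \<mu> \<in> sets \<mu>"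
    using sets_supp_Rk[OF k \<mu>] \<mu> sp by (metis prob_Rk_def sets.compl_sets)
  ultimately show ?thesis using null null_sets_subset by blast
qed

lemma measure_Int_supp_Rk:
  assumes k: "0 < k" and \<mu>: "prob_Rk k \<mu>" and A: "A \<in> sets \<mu>"
  shows "measure \<mu> (A \<inter> supp_Rk k \<mu>) = measure \<mu> A"
proof -
  have "A \<inter> supp_Rk k \<mu> = A - (Rk k - supp_Rk k \<mu>)"
    using sets.sets_into_space[OF A] space_prob_Rk[OF k \<mu>] by auto
  then show ?thesis
    using measure_Diff_null_set[OF A null_sets_compl_supp_Rk[OF k \<mu>]] by simp
qed

lemma emeasure_supp_Rk:
  assumes k: "0 < k" and \<mu>: "prob_Rk k \<mu>"
  shows "emeasure \<mu> (supp_Rk k \<mu>) = 1"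
proof -
  interpret prob_space \<mu> using \<mu> by (simp add: prob_Rk_def)
  have "measure \<mu> (supp_Rk k \<mu>) = 1"
    using measure_Int_supp_Rk[OF k \<mu> sets.top] supp_Rk_subset[OF k \<mu>] prob_space
    by (simp add: Int_absorb1 space_prob_Rk[OF k \<mu>])
  then show ?thesis by (simp add: emeasure_eq_measure)
qed

lemma supp_Rk_restrict_Bkk:
  assumes k: "0 < k" and \<mu>: "prob_Rk k \<mu>" and null: "emeasure \<mu> (Rk k - Bkk k) = 0"
  shows "supp_Rk k (restrict_space \<mu> (Bkk k)) = supp_Rk k \<mu>" and "supp_Rk k \<mu> \<subseteq> Bkk k"
proof -
  interpret R: Metric_space "Rk k" "dinf k" by (rule Metric_space_Rk[OF k])
  interpret RB: Metric_space "Bkk k" "dinf k" by (rule R.subspace[OF Bkk_subset])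
  have sp: "space \<mu> = Rk k" by (rule space_prob_Rk[OF k \<mu>])
  have B: "Bkk k \<in> sets \<mu>" using sets_Bkk[OF k] \<mu> by (simp add: prob_Rk_def)
  have RB: "Rk k - Bkk k \<in> sets \<mu>" using sets_Rk_minus_Bkk[OF k] \<mu> by (simp add: prob_Rk_def)
  have spB: "space (restrict_space \<mu> (Bkk k)) = Bkk k"
    using sp Bkk_subset by (auto simp: space_restrict_space)
  have balls: "R.mball x r \<in> sets \<mu>" for x r
    using \<mu> by (simp add: prob_Rk_def mball_in_mborel[OF R.Metric_space_axioms])
  show sub: "supp_Rk k \<mu> \<subseteq> Bkk k"
  proof
    fix x assume x: "x \<in> supp_Rk k \<mu>"
    show "x \<in> Bkk k"
    proof (rule ccontr)
      assume "x \<notin> Bkk k"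
      then have "x \<in> Rk k - Bkk k" using x sp unfolding mm_supp_def by auto
      then obtain r where r: "r > 0" "R.mball x r \<subseteq> Rk k - Bkk k"
        using Rk_minus_Bkk_open[OF k] by blast
      have "emeasure \<mu> (R.mball x r) \<le> emeasure \<mu> (Rk k - Bkk k)" using r RB by (intro emeasure_mono)
      moreover have "emeasure \<mu> (R.mball x r) > 0" using x r sp unfolding mm_supp_def by auto
      ultimately show False using null by simp
    qed
  qed
  have eq: "emeasure (restrict_space \<mu> (Bkk k)) (RB.mball x r) = emeasure \<mu> (R.mball x r)"
    if x: "x \<in> Bkk k" for x r
  proof -
    have "RB.mball x r = R.mball x r \<inter> Bkk k" using x Bkk_subset[of k] by auto
    then have "emeasure (restrict_space \<mu> (Bkk k)) (RB.mball x r) = emeasure \<mu> (R.mball x r \<inter> Bkk k)"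
      using B sp Bkk_subset by (simp add: emeasure_restrict_space Int_absorb2)
    also have "R.mball x r \<inter> Bkk k = R.mball x r - (Rk k - Bkk k)" by auto
    also have "emeasure \<mu> (R.mball x r - (Rk k - Bkk k)) = emeasure \<mu> (R.mball x r)"
      using null RB balls by (intro emeasure_Diff_null_set) (auto simp: null_sets_def)
    finally show ?thesis .
  qed
  show "supp_Rk k (restrict_space \<mu> (Bkk k)) = supp_Rk k \<mu>"
    using sub eq spB sp Bkk_subset[of k] unfolding mm_supp_def by auto
qed

lemma measure_restrict_Bkk:
  assumes k: "0 < k" and \<mu>: "prob_Rk k \<mu>" and null: "emeasure \<mu> (Rk k - Bkk k) = 0"
    and A: "A \<in> sets (mborel (Rk k) (dinf k))"
  shows "A \<inter> Bkk k \<in> sets (restrict_space \<mu> (Bkk k))"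
    and "measure (restrict_space \<mu> (Bkk k)) (A \<inter> Bkk k) = measure \<mu> A"
proof -
  have sp: "space \<mu> = Rk k" by (rule space_prob_Rk[OF k \<mu>])
  have Am: "A \<in> sets \<mu>" using A \<mu> by (simp add: prob_Rk_def)
  have Bm: "Bkk k \<in> sets \<mu>" using sets_Bkk[OF k] \<mu> by (simp add: prob_Rk_def)
  then have B: "Bkk k \<inter> space \<mu> \<in> sets \<mu>" using sp Bkk_subset[of k] by (simp add: Int_absorb2)
  show "A \<inter> Bkk k \<in> sets (restrict_space \<mu> (Bkk k))"
    using sets.Int[OF Am Bm] by (simp add: sets_restrict_space_iff[OF B])
  have "measure (restrict_space \<mu> (Bkk k)) (A \<inter> Bkk k) = measure \<mu> (A - (Rk k - Bkk k))"
    using sets.sets_into_space[OF Am] sp by (subst measure_restrict_space[OF B]) (auto intro: arg_cong2)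
  also have "\<dots> = measure \<mu> A"
    using null sets_Rk_minus_Bkk[OF k] \<mu> by (intro measure_Diff_null_set[OF Am]) (auto simp: null_sets_def prob_Rk_def)
  finally show "measure (restrict_space \<mu> (Bkk k)) (A \<inter> Bkk k) = measure \<mu> A" .
qed

section \<open>Realizing measures on Rk as mm-spaces over the reals\<close>

definition enc :: "(nat \<Rightarrow> real) \<Rightarrow> real" where
  "enc = (SOME e. inj e)"

lemma inj_enc: "inj enc"
proof -
  obtain f :: "nat set \<Rightarrow> real" where f: "bij f"
    using nat_sets_eqpoll_reals unfolding eqpoll_def by blast
  \<comment> \<open>code a sequence of reals, each coded as a set of naturals, as one set of pairs\<close>
  define e where "e x = f {prod_encode (i, n) | i n. n \<in> inv f (x i)}" for x :: "nat \<Rightarrow> real"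
  have "inj e"
  proof (rule injI)
    fix x y assume "e x = e y"
    then have E: "{prod_encode (i, n) | i n. n \<in> inv f (x i)} = {prod_encode (i, n) | i n. n \<in> inv f (y i)}"
      unfolding e_def using f by (simp add: bij_def inj_eq)
    have "n \<in> inv f (x i) \<longleftrightarrow> n \<in> inv f (y i)" for i n
      using E[THEN eqset_imp_iff, of "prod_encode (i, n)"] by auto
    then have "inv f (x i) = inv f (y i)" for i by blast
    then have "x i = y i" for i using surj_f_inv_f[OF bij_is_surj[OF f]] by metis
    then show "x = y" by blast
  qed
  then show ?thesis unfolding enc_def by (metis someI_ex)
qed

lemma inv_enc [simp]: "inv enc (enc x) = x"
  using inj_enc by simp

definition dinf_enc :: "nat \<Rightarrow> real \<Rightarrow> real \<Rightarrow> real" where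
  "dinf_enc k x y = dinf k (inv enc x) (inv enc y)"

lemma dinf_enc_enc [simp]: "dinf_enc k (enc a) (enc b) = dinf k a b"
  by (simp add: dinf_enc_def)

lemma Metric_space_enc:
  assumes k: "0 < k" and S: "S \<subseteq> Rk k"
  shows "Metric_space (enc ` S) (dinf_enc k)"
proof
  fix x y assume "x \<in> enc ` S" "y \<in> enc ` S"
  then obtain a b where "x = enc a" "y = enc b" "a \<in> S" "b \<in> S" by auto
  then show "dinf_enc k x y = 0 \<longleftrightarrow> x = y"
    using Metric_space.zero[OF Metric_space_Rk[OF k], of a b] S inj_enc by (auto simp: inj_eq)
next
  fix x y z show "dinf_enc k x z \<le> dinf_enc k x y + dinf_enc k y z"
    unfolding dinf_enc_def by (rule dinf_triangle[OF k])
qed (simp_all add: dinf_enc_def dinf_nonneg[OF k] dinf_commute)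

text \<open>Elements of mmX live on subsets of the reals, so a measure on Rk is turned into an element
  of mmX by transporting (the support of) it along the injection enc.\<close>

definition realize :: "nat \<Rightarrow> (nat \<Rightarrow> real) measure \<Rightarrow> real mms" where
  "realize k m = (dinf_enc k,
     distr (restrict_space m (supp_Rk k m)) (mborel (enc ` supp_Rk k m) (dinf_enc k)) enc)"

lemma fst_realize [simp]: "fst (realize k m) = dinf_enc k"
  by (simp add: realize_def)

context
  fixes k and m :: "(nat \<Rightarrow> real) measure"
  assumes k: "0 < k" and m: "prob_Rk k m"
begin

lemma sets_supp: "supp_Rk k m \<in> sets m"
  using sets_supp_Rk[OF k m] m by (simp add: prob_Rk_def)

lemma Metric_space_realize: "Metric_space (enc ` supp_Rk k m) (dinf_enc k)"
  by (rule Metric_space_enc[OF k supp_Rk_subset[OF k m]])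

lemma enc_measurable:
  "enc \<in> measurable (restrict_space m (supp_Rk k m)) (mborel (enc ` supp_Rk k m) (dinf_enc k))"
proof (rule lipschitz_measurable[OF _ Metric_space_realize])
  show "Metric_space (supp_Rk k m) (dinf k)"
    by (rule Metric_space.subspace[OF Metric_space_Rk[OF k] supp_Rk_subset[OF k m]])
  show "sets (restrict_space m (supp_Rk k m)) = sets (mborel (supp_Rk k m) (dinf k))"
    using sets_mborel_subspace[OF Metric_space_Rk[OF k] sets_supp_Rk[OF k m] supp_Rk_subset[OF k m]]
      sets_restrict_space_cong[of m "mborel (Rk k) (dinf k)"] m
    by (simp add: prob_Rk_def)
qed simp_all

lemma space_realize: "space (snd (realize k m)) = enc ` supp_Rk k m"
  by (simp add: realize_def space_mborel[OF Metric_space_realize])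

lemma sets_realize: "sets (snd (realize k m)) = sets (mborel (enc ` supp_Rk k m) (dinf_enc k))"
  by (simp add: realize_def)

lemma emeasure_realize:
  "A \<in> sets (snd (realize k m)) \<Longrightarrow> emeasure (snd (realize k m)) A = emeasure m (enc -` A \<inter> supp_Rk k m)"
  using enc_measurable sets_supp space_prob_Rk[OF k m] supp_Rk_subset[OF k m]
  by (simp add: realize_def emeasure_distr emeasure_restrict_space space_restrict_space Int_absorb2)

lemma measure_realize:
  "A \<in> sets (snd (realize k m)) \<Longrightarrow> measure (snd (realize k m)) A = measure m (enc -` A \<inter> supp_Rk k m)"
  using emeasure_realize by (simp add: measure_def)

lemma enc_preimage_in_sets:
  assumes "A \<in> sets (snd (realize k m))"
  shows "enc -` A \<inter> supp_Rk k m \<in> sets (mborel (Rk k) (dinf k))"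
proof -
  have "enc -` A \<inter> space (restrict_space m (supp_Rk k m)) \<in> sets (restrict_space m (supp_Rk k m))"
    using measurable_sets[OF enc_measurable] assms sets_realize by simp
  then show ?thesis using m sets_supp space_prob_Rk[OF k m] supp_Rk_subset[OF k m]
    by (simp add: prob_Rk_def sets_restrict_space_iff space_restrict_space Int_absorb2)
qed

lemma mm_supp_realize: "mm_supp (realize k m) = enc ` supp_Rk k m"
proof -
  interpret R: Metric_space "Rk k" "dinf k" by (rule Metric_space_Rk[OF k])
  interpret E: Metric_space "enc ` supp_Rk k m" "dinf_enc k" by (rule Metric_space_realize)
  have "emeasure (snd (realize k m)) (E.mball (enc s) r) > 0" if s: "s \<in> supp_Rk k m" and r: "r > 0" for s r
  proof -
    have "enc -` E.mball (enc s) r \<inter> supp_Rk k m = R.mball s r \<inter> supp_Rk k m"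
      using s supp_Rk_subset[OF k m] inj_enc by (auto simp: inj_eq)
    moreover have "measure m (R.mball s r \<inter> supp_Rk k m) = measure m (R.mball s r)"
      using m by (intro measure_Int_supp_Rk[OF k m]) (simp add: prob_Rk_def mball_in_mborel[OF R.Metric_space_axioms])
    moreover have "emeasure m (R.mball s r) > 0"
      using s r space_prob_Rk[OF k m] unfolding mm_supp_def by auto
    moreover have "E.mball (enc s) r \<in> sets (snd (realize k m))"
      by (simp add: sets_realize mball_in_mborel[OF E.Metric_space_axioms])
    moreover have "emeasure m (R.mball s r) = measure m (R.mball s r)"
      using m by (simp add: prob_Rk_def finite_measure.emeasure_eq_measure prob_space_def)
    ultimately show ?thesis
      using m by (simp add: emeasure_realize prob_Rk_def finite_measure.emeasure_eq_measure prob_space_def)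
  qed
  then show ?thesis unfolding mm_supp_def space_realize by auto
qed

lemma mcomplete_realize: "Metric_space.mcomplete (enc ` supp_Rk k m) (dinf_enc k)"
proof -
  interpret R: Metric_space "Rk k" "dinf k" by (rule Metric_space_Rk[OF k])
  interpret E: Metric_space "enc ` supp_Rk k m" "dinf_enc k" by (rule Metric_space_realize)
  interpret S: Submetric "Rk k" "dinf k" "supp_Rk k m"
    using supp_Rk_subset[OF k m] by unfold_locales
  have S_complete: "S.sub.mcomplete"
    using closedin_mm_supp[of m "dinf k"] m mcomplete_Rk[OF k] R.Metric_space_axioms
    by (intro S.closedin_mcomplete_imp_mcomplete) (auto simp: prob_Rk_def space_prob_Rk[OF k m])
  show ?thesis
    unfolding E.mcomplete_def
  proof (intro allI impI)
    fix \<sigma> assume C: "E.MCauchy \<sigma>"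
    define \<tau> where "\<tau> n = inv enc (\<sigma> n)" for n
    have "\<sigma> n \<in> enc ` supp_Rk k m" for n using C unfolding E.MCauchy_def by auto
    then have \<sigma>: "\<sigma> n = enc (\<tau> n)" "\<tau> n \<in> supp_Rk k m" for n
      unfolding \<tau>_def by (metis imageE inv_enc)+
    have "S.sub.MCauchy \<tau>"
      using C \<sigma> unfolding E.MCauchy_def S.sub.MCauchy_def by auto
    then obtain y where y: "limitin S.sub.mtopology \<tau> y sequentially"
      using S_complete unfolding S.sub.mcomplete_def by blast
    have "limitin E.mtopology \<sigma> (enc y) sequentially"
      unfolding E.limitin_metric
    proof (intro conjI allI impI)
      show "enc y \<in> enc ` supp_Rk k m" using y by (simp add: S.sub.limitin_metric)
      fix \<epsilon> :: real assume "0 < \<epsilon>"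
      then have "\<forall>\<^sub>F n in sequentially. \<tau> n \<in> supp_Rk k m \<and> dinf k (\<tau> n) y < \<epsilon>"
        using y by (simp add: S.sub.limitin_metric)
      then show "\<forall>\<^sub>F n in sequentially. \<sigma> n \<in> enc ` supp_Rk k m \<and> dinf_enc k (\<sigma> n) (enc y) < \<epsilon>"
        by (rule eventually_mono) (simp add: \<sigma>)
    qed
    then show "\<exists>x. limitin E.mtopology \<sigma> x sequentially" by blast
  qed
qed

lemma separable_realize: "separable_space (Metric_space.mtopology (enc ` supp_Rk k m) (dinf_enc k))"
proof -
  obtain C where C: "countable C" "C \<subseteq> Rk k" "\<And>x r. x \<in> Rk k \<Longrightarrow> r > 0 \<Longrightarrow> \<exists>c\<in>C. dinf k x c < r"
    using countable_dense_Rk[OF k] by blast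
  obtain C' where "countable C'" "C' \<subseteq> supp_Rk k m"
    "\<And>x r. x \<in> supp_Rk k m \<Longrightarrow> r > 0 \<Longrightarrow> \<exists>c\<in>C'. dinf k x c < r"
    using countable_dense_subset[OF Metric_space_Rk[OF k] C supp_Rk_subset[OF k m]] by blast
  then show ?thesis
    by (intro separable_space_if_dense[OF Metric_space_realize, of "enc ` C'"]) auto
qed

lemma realize_in_mmX: "realize k m \<in> mmX"
proof -
  have "prob_space (snd (realize k m))"
    using prob_space_restrict_space[OF sets_supp emeasure_supp_Rk[OF k m]]
    by (simp add: realize_def prob_space.prob_space_distr[OF _ enc_measurable])
  then show ?thesis
    unfolding mmX_def mm_space_def
    using Metric_space_realize mcomplete_realize separable_realize mm_supp_realize
    by (simp add: realize_def space_realize[unfolded realize_def] sets_realize[unfolded realize_def]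
        space_mborel[OF Metric_space_realize])
qed

lemma realize_in_Mset:
  assumes null: "emeasure m (Rk k - Bkk k) = 0" and P: "realize k m \<in> P"
  shows "m \<in> Mset P k"
proof -
  have suppB: "supp_Rk k (restrict_space m (Bkk k)) = supp_Rk k m"
    and SB: "supp_Rk k m \<subseteq> Bkk k"
    using supp_Rk_restrict_Bkk[OF k m null] by auto
  have B: "Bkk k \<in> sets m" using sets_Bkk[OF k] m by (simp add: prob_Rk_def)
  have "mm_iso (realize k m) (dinf k, restrict_space m (Bkk k))"
    unfolding mm_iso_def
  proof (intro exI[of _ "inv enc"] conjI ballI)
    show "bij_betw (inv enc) (mm_supp (realize k m)) (mm_supp (dinf k, restrict_space m (Bkk k)))"
      unfolding suppB mm_supp_realize by (rule bij_betw_imageI) (auto intro: inj_onI simp: image_image)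
    fix x x' show "fst (dinf k, restrict_space m (Bkk k)) (inv enc x) (inv enc x') = fst (realize k m) x x'"
      by (simp add: dinf_enc_def)
  next
    fix A assume "A \<in> sets (snd (dinf k, restrict_space m (Bkk k)))"
    then have A: "A \<subseteq> Bkk k" "A \<in> sets m"
      using B space_prob_Rk[OF k m] Bkk_subset[of k] by (auto simp: sets_restrict_space_iff Int_absorb2)
    have "inv enc \<in> measurable (snd (realize k m)) (mborel (Rk k) (dinf k))"
      using supp_Rk_subset[OF k m]
      by (intro lipschitz_measurable[OF Metric_space_realize Metric_space_Rk[OF k] sets_realize])
        (auto simp: dinf_enc_def)
    then have "inv enc -` A \<inter> space (snd (realize k m)) \<in> sets (snd (realize k m))"
      using A m by (intro measurable_sets) (auto simp: prob_Rk_def)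
    then have "inv enc -` A \<inter> enc ` supp_Rk k m \<in> sets (snd (realize k m))"
      by (simp add: space_realize)
    then have "measure (snd (realize k m)) (inv enc -` A \<inter> enc ` supp_Rk k m) =
        measure m (enc -` (inv enc -` A \<inter> enc ` supp_Rk k m) \<inter> supp_Rk k m)"
      by (rule measure_realize)
    also have "enc -` (inv enc -` A \<inter> enc ` supp_Rk k m) \<inter> supp_Rk k m = A \<inter> supp_Rk k m"
      by (auto dest: injD[OF inj_enc])
    also have "measure m (A \<inter> supp_Rk k m) = measure (restrict_space m (Bkk k)) (A \<inter> Bkk k)"
      using A m measure_Int_supp_Rk[OF k m] measure_restrict_Bkk(2)[OF k m null] by (simp add: prob_Rk_def)
    also have "A \<inter> Bkk k = A" using A(1) by blast
    finally show "measure (snd (realize k m)) (inv enc -` A \<inter> mm_supp (realize k m)) =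
        measure (snd (dinf k, restrict_space m (Bkk k))) A" by (simp add: mm_supp_realize)
  qed
  then show ?thesis using m null P by (auto simp: Mset_def prob_Rk_def)
qed

end

lemma Mset_D:
  "m \<in> Mset P k \<Longrightarrow> prob_Rk k m \<and> emeasure m (Rk k - Bkk k) = 0"
  unfolding Mset_def prob_Rk_def by auto

lemma prob_Rk_if_Mset: "m \<in> Mset P k \<Longrightarrow> prob_Rk k m"
  using Mset_D by blast

lemma Mset_obtain_iso:
  assumes k: "0 < k" and P: "P \<subseteq> mmX" and m: "m \<in> Mset P k"
  obtains X h where "X \<in> P" "bij_betw h (space (snd X)) (supp_Rk k m)"
    "\<And>x x'. x \<in> space (snd X) \<Longrightarrow> x' \<in> space (snd X) \<Longrightarrow> dinf k (h x) (h x') = fst X x x'"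
    "\<And>A. A \<in> sets (mborel (Rk k) (dinf k)) \<Longrightarrow> measure (snd X) (h -` A \<inter> space (snd X)) = measure m A"
proof -
  have m': "prob_Rk k m" and null: "emeasure m (Rk k - Bkk k) = 0" using Mset_D[OF m] by auto
  obtain X h where X: "X \<in> P"
    and h: "bij_betw h (mm_supp X) (supp_Rk k (restrict_space m (Bkk k)))"
      "\<forall>x\<in>mm_supp X. \<forall>x'\<in>mm_supp X. dinf k (h x) (h x') = fst X x x'"
      "\<forall>A\<in>sets (restrict_space m (Bkk k)).
         measure (snd X) (h -` A \<inter> mm_supp X) = measure (restrict_space m (Bkk k)) A"
    using m unfolding Mset_def mm_iso_def by auto
  have supp: "mm_supp X = space (snd X)" using X P mmX_D(4) by blast
  have SB: "supp_Rk k m \<subseteq> Bkk k" by (rule supp_Rk_restrict_Bkk(2)[OF k m' null])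
  have hb: "bij_betw h (space (snd X)) (supp_Rk k m)"
    using h(1) supp supp_Rk_restrict_Bkk(1)[OF k m' null] by simp
  have "measure (snd X) (h -` A \<inter> space (snd X)) = measure m A"
    if A: "A \<in> sets (mborel (Rk k) (dinf k))" for A
  proof -
    have "h x \<in> Bkk k" if "x \<in> space (snd X)" for x
      using hb SB that by (auto simp: bij_betw_def)
    then have "h -` A \<inter> space (snd X) = h -` (A \<inter> Bkk k) \<inter> mm_supp X"
      using supp by auto
    then show ?thesis
      using h(3) measure_restrict_Bkk[OF k m' null A] by metis
  qed
  then show ?thesis using that X hb h(2) supp by simp
qed

lemma mm_prec_realize_distr:
  assumes k: "0 < k" and Y: "Y \<in> mmX" and \<phi>: "\<phi> \<in> space (snd Y) \<rightarrow> Rk k"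
    and lip: "\<And>y y'. y \<in> space (snd Y) \<Longrightarrow> y' \<in> space (snd Y) \<Longrightarrow> dinf k (\<phi> y) (\<phi> y') \<le> fst Y y y'"
  defines "\<mu> \<equiv> distr (snd Y) (mborel (Rk k) (dinf k)) \<phi>"
  shows "mm_prec (realize k \<mu>) Y"
proof -
  have \<phi>_meas: "\<phi> \<in> measurable (snd Y) (mborel (Rk k) (dinf k))"
    by (rule lipschitz_measurable[OF mmX_D(1)[OF Y] Metric_space_Rk[OF k] mmX_D(3)[OF Y] \<phi>]) (use lip in blast)
  have \<mu>: "prob_Rk k \<mu>" unfolding \<mu>_def by (rule prob_Rk_distr[OF mmX_D(2)[OF Y] \<phi>_meas])
  have \<mu>_emeasure: "emeasure \<mu> B = emeasure (snd Y) (\<phi> -` B \<inter> space (snd Y))"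
    if "B \<in> sets (mborel (Rk k) (dinf k))" for B
    unfolding \<mu>_def using that \<phi>_meas by (simp add: emeasure_distr)
  have "\<phi> ` space (snd Y) \<subseteq> supp_Rk k \<mu>"
    unfolding \<mu>_def by (rule lipschitz_image_subset_mm_supp[OF Y Metric_space_Rk[OF k] \<phi>]) (use lip in blast)
  then have \<phi>_supp: "\<phi> y \<in> supp_Rk k \<mu>" if "y \<in> space (snd Y)" for y using that by blast
  show ?thesis
    unfolding mm_prec_def
  proof (intro exI[of _ "enc \<circ> \<phi>"] conjI)
    show "lip1 (enc \<circ> \<phi>) Y (realize k \<mu>)"
      using \<phi>_supp lip by (auto simp: lip1_def space_realize[OF k \<mu>])
    have "enc \<circ> \<phi> \<in> measurable (snd Y) (mborel (enc ` supp_Rk k \<mu>) (dinf_enc k))"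
      using \<phi>_supp lip
      by (intro lipschitz_measurable[OF mmX_D(1)[OF Y] Metric_space_realize[OF k \<mu>] mmX_D(3)[OF Y]]) auto
    then show meas: "enc \<circ> \<phi> \<in> measurable (snd Y) (snd (realize k \<mu>))"
      using measurable_cong_sets[OF refl sets_realize[OF k \<mu>]] by blast
    show "distr (snd Y) (snd (realize k \<mu>)) (enc \<circ> \<phi>) = snd (realize k \<mu>)"
    proof (rule measure_eqI)
      fix A assume "A \<in> sets (distr (snd Y) (snd (realize k \<mu>)) (enc \<circ> \<phi>))"
      then have A: "A \<in> sets (snd (realize k \<mu>))" by simp
      have "emeasure (snd (realize k \<mu>)) A = emeasure \<mu> (enc -` A \<inter> supp_Rk k \<mu>)"
        by (rule emeasure_realize[OF k \<mu> A])
      also have "\<dots> = emeasure (snd Y) (\<phi> -` (enc -` A \<inter> supp_Rk k \<mu>) \<inter> space (snd Y))"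
        by (rule \<mu>_emeasure[OF enc_preimage_in_sets[OF k \<mu> A]])
      also have "\<phi> -` (enc -` A \<inter> supp_Rk k \<mu>) \<inter> space (snd Y) = (enc \<circ> \<phi>) -` A \<inter> space (snd Y)"
        using \<phi>_supp by auto
      finally show "emeasure (distr (snd Y) (snd (realize k \<mu>)) (enc \<circ> \<phi>)) A = emeasure (snd (realize k \<mu>)) A"
        using A meas by (simp add: emeasure_distr)
    qed simp
  qed
qed

lemma distr_in_Mset:
  assumes k: "0 < k" and P: "pyramid P" and Y: "Y \<in> P" and \<phi>: "\<phi> \<in> space (snd Y) \<rightarrow> Bkk k"
    and lip: "\<And>y y'. y \<in> space (snd Y) \<Longrightarrow> y' \<in> space (snd Y) \<Longrightarrow> dinf k (\<phi> y) (\<phi> y') \<le> fst Y y y'"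
  shows "distr (snd Y) (mborel (Rk k) (dinf k)) \<phi> \<in> Mset P k"
proof -
  let ?\<mu> = "distr (snd Y) (mborel (Rk k) (dinf k)) \<phi>"
  have Ymm: "Y \<in> mmX" using P Y unfolding pyramid_def by blast
  have \<phi>': "\<phi> \<in> space (snd Y) \<rightarrow> Rk k" using \<phi> Bkk_subset by blast
  have \<phi>_meas: "\<phi> \<in> measurable (snd Y) (mborel (Rk k) (dinf k))"
    by (rule lipschitz_measurable[OF mmX_D(1)[OF Ymm] Metric_space_Rk[OF k] mmX_D(3)[OF Ymm] \<phi>']) (use lip in blast)
  have \<mu>: "prob_Rk k ?\<mu>" by (rule prob_Rk_distr[OF mmX_D(2)[OF Ymm] \<phi>_meas])
  have "Rk k - Bkk k \<in> sets (mborel (Rk k) (dinf k))" by (rule sets_Rk_minus_Bkk[OF k])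
  moreover have "\<phi> -` (Rk k - Bkk k) \<inter> space (snd Y) = {}" using \<phi> by auto
  ultimately have null: "emeasure ?\<mu> (Rk k - Bkk k) = 0"
    using \<phi>_meas by (simp add: emeasure_distr)
  have "realize k ?\<mu> \<in> P"
    using P Y realize_in_mmX[OF k \<mu>] mm_prec_realize_distr[OF k Ymm \<phi>' lip]
    unfolding pyramid_def by blast
  then show ?thesis by (rule realize_in_Mset[OF k \<mu> null])
qed

lemma Mset_nonempty:
  assumes k: "0 < k" and P: "pyramid P"
  shows "Mset P k \<noteq> {}"
proof -
  obtain X where X: "X \<in> P" using P unfolding pyramid_def by auto
  then have Xmm: "X \<in> mmX" using P unfolding pyramid_def by blast
  have "distr (snd X) (mborel (Rk k) (dinf k)) (\<lambda>_ _. 0) \<in> Mset P k"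
  proof (rule distr_in_Mset[OF k P X])
    show "(\<lambda>_ _. 0) \<in> space (snd X) \<rightarrow> Bkk k" by (simp add: Bkk_def Rk_def)
    fix x x' assume "x \<in> space (snd X)" "x' \<in> space (snd X)"
    then show "dinf k (\<lambda>_. 0) (\<lambda>_. 0) \<le> fst X x x'"
      using Metric_space.nonneg[OF mmX_D(1)[OF Xmm]] by (simp add: dinf_le_iff[OF k])
  qed
  then show ?thesis by blast
qed

section \<open>Weights and mixtures\<close>

lemma sum_le_has_sum:
  fixes f :: "'a \<Rightarrow> real"
  assumes "(f has_sum S) A" "finite F" "F \<subseteq> A" "\<And>x. x \<in> A - F \<Longrightarrow> 0 \<le> f x"
  shows "sum f F \<le> S"
  using has_sum_mono2[OF has_sum_finite[OF assms(2)] assms(1,3,4)] .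

lemma idx_subset: "enat M \<le> N \<Longrightarrow> {1..M} \<subseteq> idx N"
  unfolding idx_def by (auto intro: order_trans[rotated])

lemma in_A1_nonneg: "in_A1 a N \<Longrightarrow> n \<in> idx N \<Longrightarrow> 0 \<le> a n"
  unfolding in_A1_def by (auto simp: less_imp_le)

lemma in_A1_has_sum: "in_A1 a N \<Longrightarrow> (a has_sum 1) (idx N)"
  unfolding in_A1_def by simp

lemma pad_nonneg: "in_A1 a N \<Longrightarrow> 0 \<le> pad a N n"
  unfolding pad_def by (simp add: in_A1_nonneg)

lemma pad_sums: "in_A1 a N \<Longrightarrow> pad a N sums 1"
proof -
  assume "in_A1 a N"
  then have "(pad a N has_sum 1) UNIV"
    using in_A1_has_sum by (subst has_sum_cong_neutral[where g=a and T="idx N"]) (auto simp: pad_def)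
  then show ?thesis by (rule has_sum_imp_sums)
qed

definition weight_pmf :: "(nat \<Rightarrow> real) \<Rightarrow> enat \<Rightarrow> nat pmf" where
  "weight_pmf a N = embed_pmf (pad a N)"

lemma pmf_weight_pmf:
  assumes a: "in_A1 a N"
  shows "pmf (weight_pmf a N) n = pad a N n"
proof -
  have "(\<integral>\<^sup>+ n. ennreal (pad a N n) \<partial>count_space UNIV) = ennreal (\<Sum>n. pad a N n)"
    using pad_nonneg[OF a] pad_sums[OF a]
    by (simp add: nn_integral_count_space_nat suminf_ennreal2 sums_iff)
  then show ?thesis
    unfolding weight_pmf_def using pad_sums[OF a] by (intro pmf_embed_pmf pad_nonneg[OF a]) (simp add: sums_iff)
qed

text \<open>Outside idx N the components carry weight 0; they are replaced by a Dirac measure so that the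
  mixture is a bind of probability measures.\<close>

definition mix_comp :: "nat \<Rightarrow> enat \<Rightarrow> (nat \<Rightarrow> (nat \<Rightarrow> real) measure) \<Rightarrow> nat \<Rightarrow> (nat \<Rightarrow> real) measure" where
  "mix_comp k N ms n = (if n \<in> idx N then ms n else return (mborel (Rk k) (dinf k)) (\<lambda>_. 0))"

definition mix :: "nat \<Rightarrow> (nat \<Rightarrow> real) \<Rightarrow> enat \<Rightarrow> (nat \<Rightarrow> (nat \<Rightarrow> real) measure) \<Rightarrow> (nat \<Rightarrow> real) measure" where
  "mix k a N ms = measure_pmf (weight_pmf a N) \<bind> mix_comp k N ms"

context
  fixes k and a :: "nat \<Rightarrow> real" and N and ms :: "nat \<Rightarrow> (nat \<Rightarrow> real) measure"
  assumes k: "0 < k" and a: "in_A1 a N" and ms: "\<And>n. n \<in> idx N \<Longrightarrow> prob_Rk k (ms n)"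
begin

lemma prob_Rk_mix_comp: "prob_Rk k (mix_comp k N ms n)"
proof (cases "n \<in> idx N")
  case False
  have "(\<lambda>_. 0) \<in> space (mborel (Rk k) (dinf k))"
    using space_mborel[OF Metric_space_Rk[OF k]] by (simp add: Rk_def)
  then show ?thesis using False by (simp add: mix_comp_def prob_Rk_def prob_space_return)
qed (simp add: mix_comp_def ms)

lemma mix_comp_measurable:
  "mix_comp k N ms \<in> measurable (measure_pmf (weight_pmf a N)) (subprob_algebra (mborel (Rk k) (dinf k)))"
  using prob_Rk_mix_comp unfolding prob_Rk_def
  by (auto simp: space_subprob_algebra prob_space_imp_subprob_space)

lemma prob_Rk_mix: "prob_Rk k (mix k a N ms)"
  unfolding prob_Rk_def mix_def
proof
  show "sets (measure_pmf (weight_pmf a N) \<bind> mix_comp k N ms) = sets (mborel (Rk k) (dinf k))"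
    using prob_Rk_mix_comp unfolding prob_Rk_def by (intro sets_bind) auto
  show "prob_space (measure_pmf (weight_pmf a N) \<bind> mix_comp k N ms)"
    using prob_Rk_mix_comp unfolding prob_Rk_def
    by (intro measure_pmf.prob_space_bind[OF _ mix_comp_measurable]) auto
qed

lemma measure_mix_has_sum:
  assumes A: "A \<in> sets (mborel (Rk k) (dinf k))"
  shows "((\<lambda>n. a n * measure (ms n) A) has_sum measure (mix k a N ms) A) (idx N)"
proof -
  define t where "t n = pad a N n * measure (mix_comp k N ms n) A" for n
  have t: "0 \<le> t n \<and> t n \<le> pad a N n" for n
  proof -
    interpret prob_space "mix_comp k N ms n" using prob_Rk_mix_comp by (simp add: prob_Rk_def)
    show ?thesis using pad_nonneg[OF a, of n] by (simp add: t_def mult_left_le)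
  qed
  have summ: "summable t"
  proof (rule summable_comparison_test)
    show "\<exists>N0. \<forall>n\<ge>N0. norm (t n) \<le> pad a N n" using t by auto
    show "summable (pad a N)" using pad_sums[OF a] by (simp add: sums_iff)
  qed
  have "emeasure (mix k a N ms) A = (\<integral>\<^sup>+ n. emeasure (mix_comp k N ms n) A \<partial>measure_pmf (weight_pmf a N))"
    unfolding mix_def using A prob_Rk_mix_comp unfolding prob_Rk_def
    by (intro emeasure_bind[OF _ mix_comp_measurable]) auto
  also have "\<dots> = (\<integral>\<^sup>+ n. ennreal (t n) \<partial>count_space UNIV)"
    unfolding nn_integral_measure_pmf
  proof (rule nn_integral_cong)
    fix n
    interpret prob_space "mix_comp k N ms n" using prob_Rk_mix_comp by (simp add: prob_Rk_def)
    show "ennreal (pmf (weight_pmf a N) n) * emeasure (mix_comp k N ms n) A = ennreal (t n)"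
      using pad_nonneg[OF a, of n] by (simp add: t_def pmf_weight_pmf[OF a] emeasure_eq_measure ennreal_mult)
  qed
  also have "\<dots> = (\<Sum>n. ennreal (t n))" by (rule nn_integral_count_space_nat)
  also have "\<dots> = ennreal (\<Sum>n. t n)" using t summ by (intro suminf_ennreal2) auto
  finally have "emeasure (mix k a N ms) A = ennreal (\<Sum>n. t n)" .
  moreover have "0 \<le> (\<Sum>n. t n)" using t summ by (intro suminf_nonneg) auto
  ultimately have "measure (mix k a N ms) A = (\<Sum>n. t n)" by (simp add: measure_def)
  moreover have "(t has_sum (\<Sum>n. t n)) UNIV"
    using summ t by (intro sums_nonneg_imp_has_sum) (auto simp: summable_sums)
  moreover have "((\<lambda>n. a n * measure (ms n) A) has_sum s) (idx N) \<longleftrightarrow> (t has_sum s) UNIV" for s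
    by (rule has_sum_cong_neutral) (auto simp: t_def pad_def mix_comp_def)
  ultimately show ?thesis by simp
qed

lemma mix_unique:
  assumes \<mu>: "prob_Rk k \<mu>"
    and h: "\<And>A. A \<in> sets (mborel (Rk k) (dinf k)) \<Longrightarrow>
      ((\<lambda>n. a n * measure (ms n) A) has_sum measure \<mu> A) (idx N)"
  shows "\<mu> = mix k a N ms"
proof (rule measure_eqI)
  interpret \<mu>: prob_space \<mu> using \<mu> by (simp add: prob_Rk_def)
  interpret mix: prob_space "mix k a N ms" using prob_Rk_mix by (simp add: prob_Rk_def)
  show "sets \<mu> = sets (mix k a N ms)" using \<mu> prob_Rk_mix by (simp add: prob_Rk_def)
  fix A assume "A \<in> sets \<mu>"
  then have "A \<in> sets (mborel (Rk k) (dinf k))" using \<mu> by (simp add: prob_Rk_def)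
  then have "measure \<mu> A = measure (mix k a N ms) A"
    using h measure_mix_has_sum has_sum_unique by blast
  then show "emeasure \<mu> A = emeasure (mix k a N ms) A"
    by (simp add: \<mu>.emeasure_eq_measure mix.emeasure_eq_measure)
qed

lemma supp_Rk_subset_mix:
  assumes n: "n \<in> idx N"
  shows "supp_Rk k (ms n) \<subseteq> supp_Rk k (mix k a N ms)"
proof
  interpret R: Metric_space "Rk k" "dinf k" by (rule Metric_space_Rk[OF k])
  interpret mix: prob_space "mix k a N ms" using prob_Rk_mix by (simp add: prob_Rk_def)
  interpret ms: prob_space "ms n" using ms[OF n] by (simp add: prob_Rk_def)
  fix y assume y: "y \<in> supp_Rk k (ms n)"
  have "emeasure (mix k a N ms) (R.mball y r) > 0" if r: "r > 0" for r
  proof -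
    have ball: "R.mball y r \<in> sets (mborel (Rk k) (dinf k))" by (rule mball_in_mborel[OF R.Metric_space_axioms])
    have "0 < a n" using a n by (simp add: in_A1_def)
    moreover have "0 < measure (ms n) (R.mball y r)"
      using y r space_prob_Rk[OF k ms[OF n]] unfolding mm_supp_def by (auto simp: ms.emeasure_eq_measure)
    ultimately have "0 < a n * measure (ms n) (R.mball y r)" by simp
    also have "\<dots> \<le> measure (mix k a N ms) (R.mball y r)"
      using sum_le_has_sum[OF measure_mix_has_sum[OF ball], of "{n}"] n in_A1_nonneg[OF a] by simp
    finally show ?thesis by (simp add: mix.emeasure_eq_measure)
  qed
  then show "y \<in> supp_Rk k (mix k a N ms)"
    using y space_prob_Rk[OF k ms[OF n]] space_prob_Rk[OF k prob_Rk_mix] unfolding mm_supp_def by auto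
qed

lemma emeasure_mix_eq_0:
  assumes A: "A \<in> sets (mborel (Rk k) (dinf k))" and null: "\<And>n. n \<in> idx N \<Longrightarrow> emeasure (ms n) A = 0"
  shows "emeasure (mix k a N ms) A = 0"
proof -
  interpret mix: prob_space "mix k a N ms" using prob_Rk_mix by (simp add: prob_Rk_def)
  have "((\<lambda>n. a n * measure (ms n) A) has_sum 0) (idx N)"
    using null by (subst has_sum_cong[where g="\<lambda>_. 0"]) (auto simp: measure_def)
  then have "measure (mix k a N ms) A = 0" using has_sum_unique measure_mix_has_sum[OF A] by blast
  then show ?thesis by (simp add: mix.emeasure_eq_measure)
qed

end

section \<open>The measures in Mset of a direct sum\<close>

lemma Mset_dirsum_obtain_mix:
  assumes k: "0 < k" and P: "\<forall>n\<in>idx N. pyramid (P n)" and a: "in_A1 a N"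
    and \<mu>: "\<mu> \<in> Mset (dirsum P a N) k"
  obtains \<mu>s where "\<And>n. n \<in> idx N \<Longrightarrow> \<mu>s n \<in> Mset (P n) k" "\<mu> = mix k a N \<mu>s"
proof -
  let ?K = "mborel (Rk k) (dinf k)"
  obtain X h where X: "X \<in> dirsum P a N" and hb: "bij_betw h (space (snd X)) (supp_Rk k \<mu>)"
    and hi: "\<And>x x'. x \<in> space (snd X) \<Longrightarrow> x' \<in> space (snd X) \<Longrightarrow> dinf k (h x) (h x') = fst X x x'"
    and hm: "\<And>A. A \<in> sets ?K \<Longrightarrow> measure (snd X) (h -` A \<inter> space (snd X)) = measure \<mu> A"
    using Mset_obtain_iso[OF k _ \<mu>] unfolding dirsum_def by blast
  obtain Xs fs where Xs: "\<And>n. n \<in> idx N \<Longrightarrow> Xs n \<in> P n \<and> lip1 (fs n) (Xs n) X \<and> fs n \<in> measurable (snd (Xs n)) (snd X)"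
    and Xsum: "\<And>A. A \<in> sets (snd X) \<Longrightarrow>
      ((\<lambda>n. a n * measure (snd (Xs n)) (fs n -` A \<inter> space (snd (Xs n)))) has_sum measure (snd X) A) (idx N)"
    using X unfolding dirsum_def by blast
  have Xmm: "X \<in> mmX" using X unfolding dirsum_def by blast
  have \<mu>': "prob_Rk k \<mu>" and null: "emeasure \<mu> (Rk k - Bkk k) = 0" using Mset_D[OF \<mu>] by auto
  have hB: "h x \<in> Bkk k" if "x \<in> space (snd X)" for x
    using hb that supp_Rk_restrict_Bkk(2)[OF k \<mu>' null] by (auto simp: bij_betw_def)
  have h_meas: "h \<in> measurable (snd X) ?K"
    using hB Bkk_subset hi
    by (intro lipschitz_measurable[OF mmX_D(1)[OF Xmm] Metric_space_Rk[OF k] mmX_D(3)[OF Xmm]]) auto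
  define \<mu>s where "\<mu>s n = distr (snd (Xs n)) ?K (h \<circ> fs n)" for n
  have fX: "fs n y \<in> space (snd X)" "fst X (fs n y) (fs n y') \<le> fst (Xs n) y y'"
    if "n \<in> idx N" "y \<in> space (snd (Xs n))" "y' \<in> space (snd (Xs n))" for n y y'
    using Xs[OF that(1)] that(2,3) unfolding lip1_def by auto
  have \<mu>s: "\<mu>s n \<in> Mset (P n) k" if n: "n \<in> idx N" for n
    unfolding \<mu>s_def using P n Xs[OF n] fX[OF n] hB hi by (intro distr_in_Mset[OF k]) auto
  have "\<mu> = mix k a N \<mu>s"
  proof (rule mix_unique[OF k a _ \<mu>'])
    show "prob_Rk k (\<mu>s n)" if "n \<in> idx N" for n using Mset_D[OF \<mu>s[OF that]] by blast
    fix A assume A: "A \<in> sets ?K"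
    have "measure (\<mu>s n) A = measure (snd (Xs n)) (fs n -` (h -` A \<inter> space (snd X)) \<inter> space (snd (Xs n)))"
      if n: "n \<in> idx N" for n
    proof -
      have "h \<circ> fs n \<in> measurable (snd (Xs n)) ?K" using Xs[OF n] h_meas by auto
      then show ?thesis using A fX[OF n] by (auto simp: \<mu>s_def measure_distr intro!: arg_cong[where f="measure _"])
    qed
    then show "((\<lambda>n. a n * measure (\<mu>s n) A) has_sum measure \<mu> A) (idx N)"
      using Xsum[OF measurable_sets[OF h_meas A]] hm[OF A]
      by (subst has_sum_cong[where g="\<lambda>n. a n * measure (snd (Xs n)) (fs n -` (h -` A \<inter> space (snd X)) \<inter> space (snd (Xs n)))"]) auto
  qed
  then show ?thesis using that \<mu>s by blast
qed

lemma realize_in_dirsum: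
  assumes k: "0 < k" and l: "prob_Rk k l"
    and Zs: "\<And>n. n \<in> idx N \<Longrightarrow> Zs n \<in> P n \<and> Zs n \<in> mmX"
    and gs: "\<And>n x. n \<in> idx N \<Longrightarrow> x \<in> space (snd (Zs n)) \<Longrightarrow> gs n x \<in> supp_Rk k l"
    and lip: "\<And>n x x'. n \<in> idx N \<Longrightarrow> x \<in> space (snd (Zs n)) \<Longrightarrow> x' \<in> space (snd (Zs n)) \<Longrightarrow>
      dinf k (gs n x) (gs n x') \<le> fst (Zs n) x x'"
    and sum: "\<And>A. A \<in> sets (mborel (Rk k) (dinf k)) \<Longrightarrow>
      ((\<lambda>n. a n * measure (snd (Zs n)) (gs n -` A \<inter> space (snd (Zs n)))) has_sum measure l A) (idx N)"
  shows "realize k l \<in> dirsum P a N"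
  unfolding dirsum_def
proof (intro CollectI conjI exI[of _ Zs] exI[of _ "\<lambda>n. enc \<circ> gs n"] ballI)
  show "realize k l \<in> mmX" by (rule realize_in_mmX[OF k l])
  fix n assume n: "n \<in> idx N"
  show "Zs n \<in> P n" using Zs[OF n] by blast
  show "lip1 (enc \<circ> gs n) (Zs n) (realize k l)"
    using gs[OF n] lip[OF n] by (auto simp: lip1_def space_realize[OF k l])
  have "enc \<circ> gs n \<in> measurable (snd (Zs n)) (mborel (enc ` supp_Rk k l) (dinf_enc k))"
    using Zs[OF n] gs[OF n] lip[OF n]
    by (intro lipschitz_measurable[OF mmX_D(1) Metric_space_realize[OF k l] mmX_D(3)]) auto
  then show "enc \<circ> gs n \<in> measurable (snd (Zs n)) (snd (realize k l))"
    using measurable_cong_sets[OF refl sets_realize[OF k l]] by blast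
next
  fix A assume A: "A \<in> sets (snd (realize k l))"
  have "gs n -` (enc -` A \<inter> supp_Rk k l) \<inter> space (snd (Zs n)) = (enc \<circ> gs n) -` A \<inter> space (snd (Zs n))"
    if "n \<in> idx N" for n
    using gs[OF that] by auto
  then show "((\<lambda>n. a n * measure (snd (Zs n)) ((enc \<circ> gs n) -` A \<inter> space (snd (Zs n)))) has_sum
      measure (snd (realize k l)) A) (idx N)"
    unfolding measure_realize[OF k l A] using sum[OF enc_preimage_in_sets[OF k l A]]
    by (subst has_sum_cong[where g="\<lambda>n. a n * measure (snd (Zs n)) (gs n -` (enc -` A \<inter> supp_Rk k l) \<inter> space (snd (Zs n)))"]) auto
qed

lemma mix_in_Mset_dirsum:
  assumes k: "0 < k" and P: "\<forall>n\<in>idx N. pyramid (P n)" and a: "in_A1 a N"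
    and ms: "\<And>n. n \<in> idx N \<Longrightarrow> ms n \<in> Mset (P n) k"
  shows "mix k a N ms \<in> Mset (dirsum P a N) k"
proof -
  let ?K = "mborel (Rk k) (dinf k)" and ?l = "mix k a N ms"
  have ms': "prob_Rk k (ms n)" "emeasure (ms n) (Rk k - Bkk k) = 0" if "n \<in> idx N" for n
    using Mset_D[OF ms[OF that]] by auto
  have l: "prob_Rk k ?l" by (rule prob_Rk_mix[of k a N ms, OF k a ms'(1)])
  define rep where "rep n Z g \<longleftrightarrow> Z \<in> P n \<and> Z \<in> mmX \<and>
      bij_betw g (space (snd Z)) (supp_Rk k (ms n)) \<and>
      (\<forall>x\<in>space (snd Z). \<forall>x'\<in>space (snd Z). dinf k (g x) (g x') = fst Z x x') \<and>
      (\<forall>A\<in>sets ?K. measure (snd Z) (g -` A \<inter> space (snd Z)) = measure (ms n) A)" for n Z g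
  have "\<forall>n\<in>idx N. \<exists>Z g. rep n Z g"
  proof
    fix n assume n: "n \<in> idx N"
    have sub: "P n \<subseteq> mmX" using P n unfolding pyramid_def by blast
    show "\<exists>Z g. rep n Z g"
      by (rule Mset_obtain_iso[OF k sub ms[OF n]]) (use sub in \<open>unfold rep_def, blast\<close>)
  qed
  then obtain Zs gs where Z: "\<forall>n\<in>idx N. rep n (Zs n) (gs n)" by metis
  have Zn: "Zs n \<in> P n" "Zs n \<in> mmX" "bij_betw (gs n) (space (snd (Zs n))) (supp_Rk k (ms n))"
    "\<And>x x'. x \<in> space (snd (Zs n)) \<Longrightarrow> x' \<in> space (snd (Zs n)) \<Longrightarrow> dinf k (gs n x) (gs n x') = fst (Zs n) x x'"
    "\<And>A. A \<in> sets ?K \<Longrightarrow> measure (snd (Zs n)) (gs n -` A \<inter> space (snd (Zs n))) = measure (ms n) A"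
    if "n \<in> idx N" for n
    using Z that unfolding rep_def by auto
  have "realize k ?l \<in> dirsum P a N"
  proof (rule realize_in_dirsum[OF k l, where gs = gs])
    fix n x assume n: "n \<in> idx N" and x: "x \<in> space (snd (Zs n))"
    show "gs n x \<in> supp_Rk k ?l"
      using bij_betwE[OF Zn(3)[OF n]] x supp_Rk_subset_mix[of k a N ms, OF k a ms'(1) n] by blast
    fix x' assume "x' \<in> space (snd (Zs n))"
    then show "dinf k (gs n x) (gs n x') \<le> fst (Zs n) x x'" using Zn(4)[OF n x] by simp
  next
    fix A assume "A \<in> sets ?K"
    then show "((\<lambda>n. a n * measure (snd (Zs n)) (gs n -` A \<inter> space (snd (Zs n)))) has_sum measure ?l A) (idx N)"
      using Zn(5) measure_mix_has_sum[of k a N ms, OF k a ms'(1)]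
      by (subst has_sum_cong[where g="\<lambda>n. a n * measure (ms n) A"]) auto
  qed (use Zn(1,2) in blast)
  moreover have "emeasure ?l (Rk k - Bkk k) = 0"
    by (rule emeasure_mix_eq_0[of k a N ms, OF k a ms'(1) sets_Rk_minus_Bkk[OF k] ms'(2)])
  ultimately show ?thesis by (intro realize_in_Mset[OF k l])
qed

lemma Mset_dirsum_nonempty:
  assumes k: "0 < k" and P: "\<forall>n\<in>idx N. pyramid (P n)" and a: "in_A1 a N"
  shows "Mset (dirsum P a N) k \<noteq> {}"
proof -
  have "(SOME m. m \<in> Mset (P n) k) \<in> Mset (P n) k" if "n \<in> idx N" for n
    using Mset_nonempty[OF k] P that by (metis ex_in_conv someI_ex)
  then have "mix k a N (\<lambda>n. SOME m. m \<in> Mset (P n) k) \<in> Mset (dirsum P a N) k"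
    by (rule mix_in_Mset_dirsum[OF k P a])
  then show ?thesis by blast
qed

lemma has_sum_le_sum_plus_tail:
  fixes g b :: "nat \<Rightarrow> real"
  assumes g: "(g has_sum s) (idx N)" and M: "enat M \<le> N" and b: "in_A1 b N"
    and gb: "\<And>n. n \<in> idx N \<Longrightarrow> g n \<le> b n"
  shows "s \<le> (\<Sum>n=1..M. g n) + infsum b {n \<in> idx N. M < n}"
proof -
  define h where "h n = (if n \<le> M then g n else b n)" for n
  have "b summable_on {n \<in> idx N. M < n}"
    using has_sum_imp_summable[OF in_A1_has_sum[OF b]] by (rule summable_on_subset) auto
  then have "(h has_sum infsum b {n \<in> idx N. M < n}) {n \<in> idx N. M < n}"
    by (subst has_sum_cong[where g=b]) (auto simp: h_def has_sum_infsum)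
  moreover have "(h has_sum (\<Sum>n=1..M. g n)) {1..M}"
    by (subst has_sum_cong[where g=g]) (auto simp: h_def intro: has_sum_finite)
  ultimately have "(h has_sum (\<Sum>n=1..M. g n) + infsum b {n \<in> idx N. M < n}) ({1..M} \<union> {n \<in> idx N. M < n})"
    by (intro has_sum_Un_disjoint) auto
  moreover have "{1..M} \<union> {n \<in> idx N. M < n} = idx N" using idx_subset[OF M] by (auto simp: idx_def)
  ultimately have "(h has_sum (\<Sum>n=1..M. g n) + infsum b {n \<in> idx N. M < n}) (idx N)" by simp
  then show ?thesis
    by (rule has_sum_mono_neutral[OF g]) (use gb in \<open>auto simp: h_def\<close>)
qed

lemma l1dist_nonneg: "0 \<le> l1dist a N b N'"
  unfolding l1dist_def by (rule infsum_nonneg) simp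

lemma sum_abs_diff_le_l1dist:
  assumes a: "in_A1 a N" and b: "in_A1 b N'" and M: "enat M \<le> N" "enat M \<le> N'"
  shows "(\<Sum>n=1..M. \<bar>a n - b n\<bar>) \<le> l1dist a N b N'"
proof -
  have "pad a N summable_on UNIV" "pad b N' summable_on UNIV"
    using pad_sums[OF a] pad_sums[OF b] pad_nonneg[OF a] pad_nonneg[OF b]
    by (metis sums_nonneg_imp_has_sum has_sum_imp_summable)+
  then have "(\<lambda>n. pad a N n + - pad b N' n) summable_on UNIV"
    by (intro summable_on_add) (simp_all add: summable_on_uminus)
  then have "(\<lambda>n. \<bar>pad a N n - pad b N' n\<bar>) summable_on UNIV"
    using summable_on_iff_abs_summable_on_real by force
  then have "(\<lambda>n. \<bar>pad a N n - pad b N' n\<bar>) summable_on {1..}"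
    by (rule summable_on_subset) auto
  then have "infsum (\<lambda>n. \<bar>pad a N n - pad b N' n\<bar>) {1..M} \<le> l1dist a N b N'"
    unfolding l1dist_def by (intro infsum_mono_neutral) auto
  moreover have "(\<Sum>n=1..M. \<bar>a n - b n\<bar>) = (\<Sum>n=1..M. \<bar>pad a N n - pad b N' n\<bar>)"
    using idx_subset[OF M(1)] idx_subset[OF M(2)] by (intro sum.cong) (auto simp: pad_def)
  ultimately show ?thesis by simp
qed

section \<open>Prokhorov distance of mixtures\<close>

definition dP_radii :: "nat \<Rightarrow> (nat \<Rightarrow> real) measure \<Rightarrow> (nat \<Rightarrow> real) measure \<Rightarrow> real set" where
  "dP_radii k \<mu> \<nu> = {e. 0 < e \<and> (\<forall>A\<in>sets \<nu>. measure \<mu> (nbhd k e A) \<ge> measure \<nu> A - e)}"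

lemma dP_eq_Inf: "dP k \<mu> \<nu> = Inf (dP_radii k \<mu> \<nu>)"
  unfolding dP_def dP_radii_def by simp

lemma one_in_dP_radii: "prob_space \<nu> \<Longrightarrow> 1 \<in> dP_radii k \<mu> \<nu>"
  unfolding dP_radii_def by (auto simp: prob_space.prob_le_1 intro: order_trans[OF _ measure_nonneg])

lemma dP_le: "e \<in> dP_radii k \<mu> \<nu> \<Longrightarrow> dP k \<mu> \<nu> \<le> e"
  unfolding dP_eq_Inf by (rule cInf_lower) (auto simp: dP_radii_def intro!: bdd_belowI[of _ 0])

lemma dP_nonneg:
  assumes "prob_space \<nu>" shows "0 \<le> dP k \<mu> \<nu>"
  unfolding dP_eq_Inf
proof (rule cInf_greatest)
  show "dP_radii k \<mu> \<nu> \<noteq> {}" using one_in_dP_radii[OF assms] by blast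
qed (auto simp: dP_radii_def)

lemma dP_le_1: "prob_space \<nu> \<Longrightarrow> dP k \<mu> \<nu> \<le> 1"
  using dP_le one_in_dP_radii by blast

lemma dP_less_imp_radius:
  "prob_space \<nu> \<Longrightarrow> dP k \<mu> \<nu> < x \<Longrightarrow> \<exists>e\<in>dP_radii k \<mu> \<nu>. e < x"
  unfolding dP_eq_Inf using cInf_lessD[of "dP_radii k \<mu> \<nu>" x] one_in_dP_radii by blast

lemma dP_radii_mono:
  assumes k: "0 < k" and \<mu>: "prob_Rk k \<mu>" and e: "e \<in> dP_radii k \<mu> \<nu>" and le: "e \<le> e'"
  shows "e' \<in> dP_radii k \<mu> \<nu>"
proof -
  interpret prob_space \<mu> using \<mu> by (simp add: prob_Rk_def)
  have "measure \<mu> (nbhd k e A) \<le> measure \<mu> (nbhd k e' A)" for A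
    using nbhd_mono[OF le] openin_mborel[OF Metric_space_Rk[OF k] openin_nbhd[OF k]] \<mu>
    by (intro finite_measure_mono) (auto simp: prob_Rk_def)
  then show ?thesis
    using e le unfolding dP_radii_def by (smt (verit, best) mem_Collect_eq)
qed

lemma mult_le_add_abs_diff:
  fixes a b x y e :: real
  assumes "0 \<le> a" "0 \<le> x" "x \<le> 1" "x \<le> y + e"
  shows "b * x \<le> a * y + a * e + \<bar>a - b\<bar>"
proof -
  have "a * x \<le> a * (y + e)" using assms by (intro mult_left_mono)
  moreover have "(b - a) * x \<le> \<bar>a - b\<bar> * x" using assms by (intro mult_right_mono) auto
  moreover have "\<bar>a - b\<bar> * x \<le> \<bar>a - b\<bar>" using assms by (intro mult_left_le) auto
  ultimately show ?thesis by (simp add: algebra_simps)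
qed

text \<open>The first M components are matched at radius e; the weight mismatch and the weight of the
  remaining components of the second mixture only enlarge the radius.\<close>

lemma measure_mix_le_nbhd:
  assumes k: "0 < k" and a: "in_A1 a N" and b: "in_A1 b N'"
    and M: "enat M \<le> N" "enat M \<le> N'"
    and \<mu>s: "\<And>n. n \<in> idx N \<Longrightarrow> prob_Rk k (\<mu>s n)" and \<nu>s: "\<And>n. n \<in> idx N' \<Longrightarrow> prob_Rk k (\<nu>s n)"
    and e: "0 < e" "\<And>n. n \<in> {1..M} \<Longrightarrow> e \<in> dP_radii k (\<mu>s n) (\<nu>s n)"
    and A: "A \<in> sets (mborel (Rk k) (dinf k))"
  shows "measure (mix k b N' \<nu>s) A \<le>
    measure (mix k a N \<mu>s) (nbhd k e A) + e + l1dist a N b N' + infsum b {n \<in> idx N'. M < n}"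
proof -
  let ?U = "nbhd k e A" and ?t = "infsum b {n \<in> idx N'. M < n}"
  have inN: "n \<in> idx N" "n \<in> idx N'" if "n \<in> {1..M}" for n
    using that idx_subset[OF M(1)] idx_subset[OF M(2)] by auto
  have U: "?U \<in> sets (mborel (Rk k) (dinf k))"
    by (rule openin_mborel[OF Metric_space_Rk[OF k] openin_nbhd[OF k]])
  have prob_le_1: "0 \<le> measure (\<nu>s n) A \<and> measure (\<nu>s n) A \<le> 1" if "n \<in> idx N'" for n
    using \<nu>s[OF that] by (simp add: prob_Rk_def prob_space.prob_le_1)
  have "measure (mix k b N' \<nu>s) A \<le> (\<Sum>n=1..M. b n * measure (\<nu>s n) A) + ?t"
    using M(2) prob_le_1 in_A1_nonneg[OF b]
    by (intro has_sum_le_sum_plus_tail[OF measure_mix_has_sum[OF k b \<nu>s A] _ b]) (auto intro: mult_left_le)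
  also have "\<dots> \<le> (\<Sum>n=1..M. a n * measure (\<mu>s n) ?U + a n * e + \<bar>a n - b n\<bar>) + ?t"
  proof (intro add_right_mono sum_mono mult_le_add_abs_diff)
    fix n assume n: "n \<in> {1..M}"
    show "measure (\<nu>s n) A \<le> measure (\<mu>s n) ?U + e"
      using e(2)[OF n] A \<nu>s[OF inN(2)[OF n]] unfolding dP_radii_def prob_Rk_def by auto
  qed (use in_A1_nonneg[OF a] inN prob_le_1 in auto)
  also have "\<dots> = (\<Sum>n=1..M. a n * measure (\<mu>s n) ?U) + e * (\<Sum>n=1..M. a n) + (\<Sum>n=1..M. \<bar>a n - b n\<bar>) + ?t"
    by (simp add: sum.distrib sum_distrib_left mult.commute)
  also have "\<dots> \<le> measure (mix k a N \<mu>s) ?U + e + l1dist a N b N' + ?t"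
  proof -
    have "(\<Sum>n=1..M. a n * measure (\<mu>s n) ?U) \<le> measure (mix k a N \<mu>s) ?U"
      using idx_subset[OF M(1)] in_A1_nonneg[OF a]
      by (intro sum_le_has_sum[OF measure_mix_has_sum[OF k a \<mu>s U]]) auto
    moreover have "(\<Sum>n=1..M. a n) \<le> 1"
      using idx_subset[OF M(1)] in_A1_nonneg[OF a] by (intro sum_le_has_sum[OF in_A1_has_sum[OF a]]) auto
    then have "e * (\<Sum>n=1..M. a n) \<le> e" using e(1) by (simp add: mult_le_cancel_left1)
    ultimately show ?thesis using sum_abs_diff_le_l1dist[OF a b M] by linarith
  qed
  finally show ?thesis .
qed

lemma dP_mix_le:
  assumes k: "0 < k" and a: "in_A1 a N" and b: "in_A1 b N'"
    and M: "enat M \<le> N" "enat M \<le> N'"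
    and \<mu>s: "\<And>n. n \<in> idx N \<Longrightarrow> prob_Rk k (\<mu>s n)" and \<nu>s: "\<And>n. n \<in> idx N' \<Longrightarrow> prob_Rk k (\<nu>s n)"
    and e: "0 < e" "\<And>n. n \<in> {1..M} \<Longrightarrow> e \<in> dP_radii k (\<mu>s n) (\<nu>s n)"
  shows "dP k (mix k a N \<mu>s) (mix k b N' \<nu>s) \<le> e + l1dist a N b N' + infsum b {n \<in> idx N'. M < n}"
proof (rule dP_le)
  let ?\<mu> = "mix k a N \<mu>s" and ?\<nu> = "mix k b N' \<nu>s"
  let ?E = "e + l1dist a N b N' + infsum b {n \<in> idx N'. M < n}"
  have "e \<le> ?E"
    using l1dist_nonneg[of a N b N'] in_A1_nonneg[OF b] infsum_nonneg[of "{n \<in> idx N'. M < n}" b] by force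
  have "measure ?\<nu> A - ?E \<le> measure ?\<mu> (nbhd k ?E A)" if A: "A \<in> sets ?\<nu>" for A
  proof -
    interpret prob_space ?\<mu> using prob_Rk_mix[OF k a \<mu>s] by (simp add: prob_Rk_def)
    have AK: "A \<in> sets (mborel (Rk k) (dinf k))" using A prob_Rk_mix[OF k b \<nu>s] by (simp add: prob_Rk_def)
    have "measure ?\<mu> (nbhd k e A) \<le> measure ?\<mu> (nbhd k ?E A)"
      using nbhd_mono[OF \<open>e \<le> ?E\<close>] openin_mborel[OF Metric_space_Rk[OF k] openin_nbhd[OF k]] prob_Rk_mix[OF k a \<mu>s]
      by (intro finite_measure_mono) (auto simp: prob_Rk_def)
    then show ?thesis
      using measure_mix_le_nbhd[where \<mu>s = \<mu>s and \<nu>s = \<nu>s, OF k a b M \<mu>s \<nu>s e AK] by linarith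
  qed
  then show "?E \<in> dP_radii k ?\<mu> ?\<nu>"
    unfolding dP_radii_def using e(1) \<open>e \<le> ?E\<close> by auto
qed

section \<open>Hausdorff distance of Msets\<close>

context
  fixes k and S T :: "(nat \<Rightarrow> real) measure set"
  assumes k: "0 < k"
    and S: "S \<noteq> {}" "\<And>\<mu>. \<mu> \<in> S \<Longrightarrow> prob_Rk k \<mu>" and T: "T \<noteq> {}" "\<And>\<nu>. \<nu> \<in> T \<Longrightarrow> prob_Rk k \<nu>"
begin

lemma prob_space_T: "\<nu> \<in> T \<Longrightarrow> prob_space \<nu>"
  using T(2) by (simp add: prob_Rk_def)

lemma INF_dP_right_bounds: "0 \<le> (INF \<nu>\<in>T. dP k \<mu> \<nu>) \<and> (INF \<nu>\<in>T. dP k \<mu> \<nu>) \<le> 1"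
proof
  show "0 \<le> (INF \<nu>\<in>T. dP k \<mu> \<nu>)" using T(1) prob_space_T dP_nonneg by (intro cINF_greatest) auto
  obtain \<nu> where \<nu>: "\<nu> \<in> T" using T(1) by blast
  have "(INF \<nu>\<in>T. dP k \<mu> \<nu>) \<le> dP k \<mu> \<nu>"
    using \<nu> prob_space_T dP_nonneg by (intro cINF_lower bdd_belowI[of _ 0]) auto
  then show "(INF \<nu>\<in>T. dP k \<mu> \<nu>) \<le> 1" using dP_le_1[OF prob_space_T[OF \<nu>], of k \<mu>] by linarith
qed

lemma INF_dP_left_bounds:
  assumes \<nu>: "\<nu> \<in> T" shows "0 \<le> (INF \<mu>\<in>S. dP k \<mu> \<nu>) \<and> (INF \<mu>\<in>S. dP k \<mu> \<nu>) \<le> 1"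
proof
  show "0 \<le> (INF \<mu>\<in>S. dP k \<mu> \<nu>)" using S(1) dP_nonneg[OF prob_space_T[OF \<nu>]] by (intro cINF_greatest) auto
  obtain \<mu> where \<mu>: "\<mu> \<in> S" using S(1) by blast
  have "(INF \<mu>\<in>S. dP k \<mu> \<nu>) \<le> dP k \<mu> \<nu>"
    using \<mu> dP_nonneg[OF prob_space_T[OF \<nu>]] by (intro cINF_lower bdd_belowI[of _ 0]) auto
  then show "(INF \<mu>\<in>S. dP k \<mu> \<nu>) \<le> 1" using dP_le_1[OF prob_space_T[OF \<nu>], of k \<mu>] by linarith
qed

lemma dH_bounds: "0 \<le> dH k S T \<and> dH k S T \<le> 1"
proof -
  obtain \<mu> where \<mu>: "\<mu> \<in> S" using S(1) by blast
  have bdd: "bdd_above ((\<lambda>\<mu>. INF \<nu>\<in>T. dP k \<mu> \<nu>) ` S)"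
    using INF_dP_right_bounds by (intro bdd_aboveI[of _ 1]) auto
  have "0 \<le> (SUP \<mu>\<in>S. INF \<nu>\<in>T. dP k \<mu> \<nu>)"
    using INF_dP_right_bounds[of \<mu>] cSUP_upper[OF \<mu> bdd] by linarith
  moreover have "(SUP \<mu>\<in>S. INF \<nu>\<in>T. dP k \<mu> \<nu>) \<le> 1"
    using S(1) INF_dP_right_bounds by (intro cSUP_least) auto
  moreover have "(SUP \<nu>\<in>T. INF \<mu>\<in>S. dP k \<mu> \<nu>) \<le> 1"
    using T(1) INF_dP_left_bounds by (intro cSUP_least) auto
  ultimately show ?thesis unfolding dH_def by simp
qed

lemma dH_less_obtain_right:
  assumes \<mu>: "\<mu> \<in> S" and lt: "dH k S T < C"
  shows "\<exists>\<nu>\<in>T. C \<in> dP_radii k \<mu> \<nu>"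
proof -
  have "(INF \<nu>\<in>T. dP k \<mu> \<nu>) \<le> dH k S T"
    unfolding dH_def using INF_dP_right_bounds \<mu>
    by (intro order_trans[OF cSUP_upper max.cobounded1] bdd_aboveI[of _ 1]) auto
  then have "(INF \<nu>\<in>T. dP k \<mu> \<nu>) < C" using lt by linarith
  then obtain \<nu> where \<nu>: "\<nu> \<in> T" "dP k \<mu> \<nu> < C"
    using cInf_lessD[of "(\<lambda>\<nu>. dP k \<mu> \<nu>) ` T" C] T(1) by blast
  then obtain e where e: "e \<in> dP_radii k \<mu> \<nu>" "e < C" using dP_less_imp_radius prob_space_T by blast
  then show ?thesis using \<nu> dP_radii_mono[OF k S(2)[OF \<mu>] e(1) less_imp_le[OF e(2)]] by blast
qed

lemma dH_less_obtain_left: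
  assumes \<nu>: "\<nu> \<in> T" and lt: "dH k S T < C"
  shows "\<exists>\<mu>\<in>S. C \<in> dP_radii k \<mu> \<nu>"
proof -
  have "(INF \<mu>\<in>S. dP k \<mu> \<nu>) \<le> dH k S T"
    unfolding dH_def using INF_dP_left_bounds \<nu>
    by (intro order_trans[OF cSUP_upper max.cobounded2] bdd_aboveI[of _ 1]) auto
  then have "(INF \<mu>\<in>S. dP k \<mu> \<nu>) < C" using lt by linarith
  then obtain \<mu> where \<mu>: "\<mu> \<in> S" "dP k \<mu> \<nu> < C"
    using cInf_lessD[of "(\<lambda>\<mu>. dP k \<mu> \<nu>) ` S" C] S(1) by blast
  then obtain e where e: "e \<in> dP_radii k \<mu> \<nu>" "e < C" using dP_less_imp_radius prob_space_T[OF \<nu>] by blast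
  then show ?thesis using \<mu> dP_radii_mono[OF k S(2)[OF \<mu>(1)] e(1) less_imp_le[OF e(2)]] by blast
qed

lemma dH_le:
  assumes right: "\<And>\<mu> \<epsilon>. \<mu> \<in> S \<Longrightarrow> 0 < \<epsilon> \<Longrightarrow> \<exists>\<nu>\<in>T. dP k \<mu> \<nu> \<le> C + \<epsilon>"
    and left: "\<And>\<nu> \<epsilon>. \<nu> \<in> T \<Longrightarrow> 0 < \<epsilon> \<Longrightarrow> \<exists>\<mu>\<in>S. dP k \<mu> \<nu> \<le> C + \<epsilon>"
  shows "dH k S T \<le> C"
proof -
  have right': "(INF \<nu>\<in>T. dP k \<mu> \<nu>) \<le> C" if \<mu>: "\<mu> \<in> S" for \<mu>
  proof (rule field_le_epsilon)
    fix \<epsilon> :: real assume "0 < \<epsilon>"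
    then obtain \<nu> where "\<nu> \<in> T" "dP k \<mu> \<nu> \<le> C + \<epsilon>" using right[OF \<mu>] by blast
    then show "(INF \<nu>\<in>T. dP k \<mu> \<nu>) \<le> C + \<epsilon>"
      using prob_space_T dP_nonneg by (intro cINF_lower2 bdd_belowI[of _ 0]) auto
  qed
  have left': "(INF \<mu>\<in>S. dP k \<mu> \<nu>) \<le> C" if \<nu>: "\<nu> \<in> T" for \<nu>
  proof (rule field_le_epsilon)
    fix \<epsilon> :: real assume "0 < \<epsilon>"
    then obtain \<mu> where "\<mu> \<in> S" "dP k \<mu> \<nu> \<le> C + \<epsilon>" using left[OF \<nu>] by blast
    then show "(INF \<mu>\<in>S. dP k \<mu> \<nu>) \<le> C + \<epsilon>"
      using dP_nonneg[OF prob_space_T[OF \<nu>]] by (intro cINF_lower2 bdd_belowI[of _ 0]) auto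
  qed
  show ?thesis
    unfolding dH_def using S(1) T(1) right' left' by (intro max.boundedI cSUP_least)
qed

end

lemma dH_Mset_bounds:
  "0 < k \<Longrightarrow> Mset P k \<noteq> {} \<Longrightarrow> Mset Q k \<noteq> {} \<Longrightarrow>
    0 \<le> dH k (Mset P k) (Mset Q k) \<and> dH k (Mset P k) (Mset Q k) \<le> 1"
  by (rule dH_bounds[OF _ _ prob_Rk_if_Mset _ prob_Rk_if_Mset])

lemma ex_family:
  assumes "\<forall>n\<in>I. \<exists>x\<in>A n. R n x" and "\<forall>n\<in>J. A n \<noteq> {}"
  shows "\<exists>xs. (\<forall>n\<in>J. xs n \<in> A n) \<and> (\<forall>n\<in>I. R n (xs n))"
proof -
  define xs where "xs n = (if n \<in> I then SOME x. x \<in> A n \<and> R n x else SOME x. x \<in> A n)" for n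
  have "xs n \<in> A n \<and> R n (xs n)" if "n \<in> I" for n
    using someI_ex[OF assms(1)[rule_format, OF that, unfolded Bex_def]] that unfolding xs_def by simp
  moreover have "xs n \<in> A n" if "n \<in> J" "n \<notin> I" for n
    using assms(2) that unfolding xs_def by (simp add: some_in_eq)
  ultimately show ?thesis by blast
qed

lemma dH_Mset_less_sum:
  assumes k: "0 < k" and ne: "\<And>n. n \<in> I \<Longrightarrow> Mset (P n) k \<noteq> {} \<and> Mset (Q n) k \<noteq> {}"
    and I: "finite I" "n \<in> I" and \<epsilon>: "0 < \<epsilon>"
  shows "dH k (Mset (P n) k) (Mset (Q n) k) < (\<Sum>n\<in>I. dH k (Mset (P n) k) (Mset (Q n) k)) + \<epsilon>"
proof -
  have "dH k (Mset (P n) k) (Mset (Q n) k) \<le> (\<Sum>n\<in>I. dH k (Mset (P n) k) (Mset (Q n) k))"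
    using I dH_Mset_bounds[OF k] ne by (intro member_le_sum) auto
  then show ?thesis using \<epsilon> by linarith
qed

lemma dP_mix_Mset_dirsum_le:
  assumes k: "0 < k" and a: "in_A1 a N" and b: "in_A1 b N'"
    and P: "\<forall>n\<in>idx N. pyramid (P n)" and Q: "\<forall>n\<in>idx N'. pyramid (Q n)"
    and M: "enat M \<le> N" "enat M \<le> N'"
    and \<mu>s: "\<forall>n\<in>idx N. \<mu>s n \<in> Mset (P n) k" and \<nu>s: "\<forall>n\<in>idx N'. \<nu>s n \<in> Mset (Q n) k"
    and C: "0 < C" "\<forall>n\<in>{1..M}. C \<in> dP_radii k (\<mu>s n) (\<nu>s n)"
  shows "mix k a N \<mu>s \<in> Mset (dirsum P a N) k" "mix k b N' \<nu>s \<in> Mset (dirsum Q b N') k"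
    "dP k (mix k a N \<mu>s) (mix k b N' \<nu>s) \<le>
      C + (l1dist a N b N' + infsum a {n \<in> idx N. M < n} + infsum b {n \<in> idx N'. M < n})"
proof -
  show "mix k a N \<mu>s \<in> Mset (dirsum P a N) k" using \<mu>s by (intro mix_in_Mset_dirsum[OF k P a]) auto
  show "mix k b N' \<nu>s \<in> Mset (dirsum Q b N') k" using \<nu>s by (intro mix_in_Mset_dirsum[OF k Q b]) auto
  have "0 \<le> infsum a {n \<in> idx N. M < n}" using in_A1_nonneg[OF a] by (intro infsum_nonneg) auto
  moreover have "dP k (mix k a N \<mu>s) (mix k b N' \<nu>s) \<le> C + l1dist a N b N' + infsum b {n \<in> idx N'. M < n}"
    using \<mu>s \<nu>s C by (intro dP_mix_le[OF k a b M]) (auto intro: prob_Rk_if_Mset)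
  ultimately show "dP k (mix k a N \<mu>s) (mix k b N' \<nu>s) \<le>
      C + (l1dist a N b N' + infsum a {n \<in> idx N. M < n} + infsum b {n \<in> idx N'. M < n})" by linarith
qed

text \<open>A measure of one direct sum is the mixture of its components; approximating the first M of
  them from the other side and mixing with the other weights gives a nearby measure of the other
  direct sum.\<close>

lemma dH_Mset_dirsum_le:
  assumes k: "0 < k" and a: "in_A1 a N" and b: "in_A1 b N'"
    and P: "\<forall>n\<in>idx N. pyramid (P n)" and Q: "\<forall>n\<in>idx N'. pyramid (Q n)"
    and M: "enat M \<le> N" "enat M \<le> N'"
  shows "dH k (Mset (dirsum P a N) k) (Mset (dirsum Q b N') k) \<le>
    (\<Sum>n=1..M. dH k (Mset (P n) k) (Mset (Q n) k)) +
    (l1dist a N b N' + infsum a {n \<in> idx N. M < n} + infsum b {n \<in> idx N'. M < n})"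
    (is "_ \<le> ?H + ?c")
proof -
  have inN: "n \<in> idx N" "n \<in> idx N'" if "n \<in> {1..M}" for n
    using that idx_subset[OF M(1)] idx_subset[OF M(2)] by auto
  have PN: "Mset (P n) k \<noteq> {}" if "n \<in> idx N" for n using Mset_nonempty[OF k] P that by auto
  have QN: "Mset (Q n) k \<noteq> {}" if "n \<in> idx N'" for n using Mset_nonempty[OF k] Q that by auto
  have Hn: "dH k (Mset (P n) k) (Mset (Q n) k) < ?H + \<epsilon>" if "n \<in> {1..M}" "0 < \<epsilon>" for n \<epsilon>
    using that PN QN inN by (intro dH_Mset_less_sum[OF k]) auto
  have "0 \<le> ?H" using dH_Mset_bounds[OF k PN[OF inN(1)] QN[OF inN(2)]] by (intro sum_nonneg) auto
  then have H\<epsilon>: "0 < ?H + \<epsilon>" if "0 < \<epsilon>" for \<epsilon> using that by linarith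
  show ?thesis
  proof (rule dH_le[OF k Mset_dirsum_nonempty[OF k P a] prob_Rk_if_Mset
        Mset_dirsum_nonempty[OF k Q b] prob_Rk_if_Mset])
    fix \<mu> and \<epsilon> :: real assume \<mu>: "\<mu> \<in> Mset (dirsum P a N) k" and \<epsilon>: "0 < \<epsilon>"
    obtain \<mu>s where \<mu>s: "\<And>n. n \<in> idx N \<Longrightarrow> \<mu>s n \<in> Mset (P n) k" and \<mu>_eq: "\<mu> = mix k a N \<mu>s"
      using Mset_dirsum_obtain_mix[OF k P a \<mu>] by blast
    have "\<exists>\<nu>\<in>Mset (Q n) k. ?H + \<epsilon> \<in> dP_radii k (\<mu>s n) \<nu>" if n: "n \<in> {1..M}" for n
      using dH_less_obtain_right[OF k PN[OF inN(1)[OF n]] prob_Rk_if_Mset QN[OF inN(2)[OF n]] prob_Rk_if_Mset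
          \<mu>s[OF inN(1)[OF n]] Hn[OF n \<epsilon>]] .
    then have "\<exists>\<nu>s. (\<forall>n\<in>idx N'. \<nu>s n \<in> Mset (Q n) k) \<and> (\<forall>n\<in>{1..M}. ?H + \<epsilon> \<in> dP_radii k (\<mu>s n) (\<nu>s n))"
      using QN by (intro ex_family) auto
    then obtain \<nu>s where \<nu>s: "\<forall>n\<in>idx N'. \<nu>s n \<in> Mset (Q n) k"
      and e: "\<forall>n\<in>{1..M}. ?H + \<epsilon> \<in> dP_radii k (\<mu>s n) (\<nu>s n)" by blast
    have \<mu>s': "\<forall>n\<in>idx N. \<mu>s n \<in> Mset (P n) k" using \<mu>s by blast
    show "\<exists>\<nu>\<in>Mset (dirsum Q b N') k. dP k \<mu> \<nu> \<le> ?H + ?c + \<epsilon>"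
      using dP_mix_Mset_dirsum_le(2,3)[OF k a b P Q M \<mu>s' \<nu>s H\<epsilon>[OF \<epsilon>] e] unfolding \<mu>_eq
      by (intro bexI[of _ "mix k b N' \<nu>s"]) simp_all
  next
    fix \<nu> and \<epsilon> :: real assume \<nu>: "\<nu> \<in> Mset (dirsum Q b N') k" and \<epsilon>: "0 < \<epsilon>"
    obtain \<nu>s where \<nu>s: "\<And>n. n \<in> idx N' \<Longrightarrow> \<nu>s n \<in> Mset (Q n) k" and \<nu>_eq: "\<nu> = mix k b N' \<nu>s"
      using Mset_dirsum_obtain_mix[OF k Q b \<nu>] by blast
    have "\<exists>\<mu>\<in>Mset (P n) k. ?H + \<epsilon> \<in> dP_radii k \<mu> (\<nu>s n)" if n: "n \<in> {1..M}" for n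
      using dH_less_obtain_left[OF k PN[OF inN(1)[OF n]] prob_Rk_if_Mset QN[OF inN(2)[OF n]] prob_Rk_if_Mset
          \<nu>s[OF inN(2)[OF n]] Hn[OF n \<epsilon>]] .
    then have "\<exists>\<mu>s. (\<forall>n\<in>idx N. \<mu>s n \<in> Mset (P n) k) \<and> (\<forall>n\<in>{1..M}. ?H + \<epsilon> \<in> dP_radii k (\<mu>s n) (\<nu>s n))"
      using PN by (intro ex_family) auto
    then obtain \<mu>s where \<mu>s: "\<forall>n\<in>idx N. \<mu>s n \<in> Mset (P n) k"
      and e: "\<forall>n\<in>{1..M}. ?H + \<epsilon> \<in> dP_radii k (\<mu>s n) (\<nu>s n)" by blast
    have \<nu>s': "\<forall>n\<in>idx N'. \<nu>s n \<in> Mset (Q n) k" using \<nu>s by blast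
    show "\<exists>\<mu>\<in>Mset (dirsum P a N) k. dP k \<mu> \<nu> \<le> ?H + ?c + \<epsilon>"
      using dP_mix_Mset_dirsum_le(1,3)[OF k a b P Q M \<mu>s \<nu>s' H\<epsilon>[OF \<epsilon>] e] unfolding \<nu>_eq
      by (intro bexI[of _ "mix k a N \<mu>s"]) simp_all
  qed
qed

definition rho_weight :: "nat \<Rightarrow> real" where
  "rho_weight k = (1 / 2 ^ Suc k) * (1 / (2 * real (Suc k)))"

lemma rho_eq: "rho P Q = (\<Sum>k. rho_weight k * dH (Suc k) (Mset P (Suc k)) (Mset Q (Suc k)))"
  unfolding rho_def rho_weight_def ..

lemma rho_weight_nonneg: "0 \<le> rho_weight k"
  unfolding rho_weight_def by simp

lemma rho_weight_le: "rho_weight k \<le> (1 / 2) ^ k / 4"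
proof -
  have "rho_weight k \<le> (1 / 2 ^ Suc k) * (1 / 2)"
    unfolding rho_weight_def by (intro mult_left_mono) (auto simp: field_simps)
  then show ?thesis by (simp add: power_divide field_simps)
qed

lemma summable_rho_weight_mult:
  assumes "\<And>k. 0 \<le> f k \<and> f k \<le> 1"
  shows "summable (\<lambda>k. rho_weight k * f k)"
proof (rule summable_comparison_test)
  show "\<exists>N. \<forall>k\<ge>N. norm (rho_weight k * f k) \<le> (1 / 2) ^ k / 4"
  proof (intro exI[of _ 0] allI impI)
    fix k :: nat
    have "norm (rho_weight k * f k) \<le> rho_weight k"
      using assms[of k] rho_weight_nonneg[of k] by (simp add: abs_mult mult_left_le)
    then show "norm (rho_weight k * f k) \<le> (1 / 2) ^ k / 4" using rho_weight_le[of k] by linarith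
  qed
  show "summable (\<lambda>k. (1 / 2 :: real) ^ k / 4)" by (intro summable_divide summable_geometric) simp
qed

lemma suminf_rho_weight_le: "(\<Sum>k. rho_weight k) \<le> 1 / 2"
proof -
  have "(\<Sum>k. rho_weight k) \<le> (\<Sum>k. (1 / 2 :: real) ^ k / 4)"
    using summable_rho_weight_mult[of "\<lambda>_. 1"]
    by (intro suminf_le rho_weight_le) (auto intro!: summable_divide summable_geometric)
  also have "\<dots> = 1 / 2" by (simp add: suminf_divide summable_geometric suminf_geometric)
  finally show ?thesis .
qed

lemma rho_le_sum_rho:
  fixes Ps Qs :: "nat \<Rightarrow> real mms set"
  assumes I: "finite I" and c: "0 \<le> c"
    and ne: "\<And>k. 0 < k \<Longrightarrow> Mset P k \<noteq> {} \<and> Mset Q k \<noteq> {}"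
    and ne_I: "\<And>n k. n \<in> I \<Longrightarrow> 0 < k \<Longrightarrow> Mset (Ps n) k \<noteq> {} \<and> Mset (Qs n) k \<noteq> {}"
    and le: "\<And>k. 0 < k \<Longrightarrow> dH k (Mset P k) (Mset Q k) \<le> (\<Sum>n\<in>I. dH k (Mset (Ps n) k) (Mset (Qs n) k)) + c"
  shows "rho P Q \<le> (\<Sum>n\<in>I. rho (Ps n) (Qs n)) + c / 2"
proof -
  let ?D = "\<lambda>k. dH (Suc k) (Mset P (Suc k)) (Mset Q (Suc k))"
  let ?H = "\<lambda>n k. dH (Suc k) (Mset (Ps n) (Suc k)) (Mset (Qs n) (Suc k))"
  have sD: "summable (\<lambda>k. rho_weight k * ?D k)"
    using ne by (intro summable_rho_weight_mult dH_Mset_bounds) auto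
  have sH: "summable (\<lambda>k. rho_weight k * ?H n k)" if "n \<in> I" for n
    using ne_I[OF that] by (intro summable_rho_weight_mult dH_Mset_bounds) auto
  have sW: "summable rho_weight" using summable_rho_weight_mult[of "\<lambda>_. 1"] by simp
  have "rho P Q \<le> (\<Sum>k. (\<Sum>n\<in>I. rho_weight k * ?H n k) + rho_weight k * c)"
    unfolding rho_eq
  proof (rule suminf_le[OF _ sD])
    show "rho_weight k * ?D k \<le> (\<Sum>n\<in>I. rho_weight k * ?H n k) + rho_weight k * c" for k
      using mult_left_mono[OF le rho_weight_nonneg, of "Suc k"] by (simp add: algebra_simps sum_distrib_left)
    show "summable (\<lambda>k. (\<Sum>n\<in>I. rho_weight k * ?H n k) + rho_weight k * c)"
      using sH sW by (intro summable_add summable_sum summable_mult2) auto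
  qed
  also have "\<dots> = (\<Sum>k. \<Sum>n\<in>I. rho_weight k * ?H n k) + (\<Sum>k. rho_weight k * c)"
    using sH sW by (intro suminf_add[symmetric] summable_sum summable_mult2)
  also have "\<dots> = (\<Sum>n\<in>I. \<Sum>k. rho_weight k * ?H n k) + (\<Sum>k. rho_weight k) * c"
    using sH sW by (simp add: suminf_sum suminf_mult2)
  also have "\<dots> \<le> (\<Sum>n\<in>I. rho (Ps n) (Qs n)) + c / 2"
    using mult_right_mono[OF suminf_rho_weight_le c] by (simp add: rho_eq)
  finally show ?thesis .
qed

theorem corollary3p15:
  fixes a b :: "nat \<Rightarrow> real" and N N' :: enat
    and P Q :: "nat \<Rightarrow> real mms set" and M :: nat
  assumes "in_A1 a N" and "in_A1 b N'"
    and "\<forall>n\<in>idx N. pyramid (P n)" and "\<forall>n\<in>idx N'. pyramid (Q n)"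
    and "1 \<le> M" and "enat M \<le> min N N'"
  shows "rho (dirsum P a N) (dirsum Q b N') \<le>
    (\<Sum>n=1..M. rho (P n) (Q n)) + 1/2 * l1dist a N b N'
    + 1/2 * infsum a {n \<in> idx N. M < n} + 1/2 * infsum b {n \<in> idx N'. M < n}"
proof -
  note a = assms(1) and b = assms(2) and P = assms(3) and Q = assms(4)
  have M: "enat M \<le> N" "enat M \<le> N'" using assms(6) by auto
  define c where "c = l1dist a N b N' + infsum a {n \<in> idx N. M < n} + infsum b {n \<in> idx N'. M < n}"
  have "0 \<le> c"
    unfolding c_def using l1dist_nonneg in_A1_nonneg[OF a] in_A1_nonneg[OF b]
    by (intro add_nonneg_nonneg infsum_nonneg) auto
  then have "rho (dirsum P a N) (dirsum Q b N') \<le> (\<Sum>n=1..M. rho (P n) (Q n)) + c / 2"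
  proof (rule rho_le_sum_rho[OF finite_atLeastAtMost])
    show "Mset (dirsum P a N) k \<noteq> {} \<and> Mset (dirsum Q b N') k \<noteq> {}" if "0 < k" for k
      using Mset_dirsum_nonempty[OF that P a] Mset_dirsum_nonempty[OF that Q b] by blast
    show "Mset (P n) k \<noteq> {} \<and> Mset (Q n) k \<noteq> {}" if "n \<in> {1..M}" "0 < k" for n k
      using Mset_nonempty[OF that(2)] P Q idx_subset[OF M(1)] idx_subset[OF M(2)] that(1) by blast
    show "dH k (Mset (dirsum P a N) k) (Mset (dirsum Q b N') k) \<le>
        (\<Sum>n=1..M. dH k (Mset (P n) k) (Mset (Q n) k)) + c" if "0 < k" for k
      unfolding c_def by (rule dH_Mset_dirsum_le[OF that a b P Q M])
  qed
  then show ?thesis unfolding c_def by (simp add: field_simps)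
qed

end
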